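(* Consider a sequence of data-generating processes indexed by $m=1,2,\dots$ with $K_m\to\infty$ cells and a fixed scalar $\beta$. In cell $a\in\{1,\dots,K_m\}$ and fold $v\in\{0,1\}$ the fold-level means satisfy $\bar S_{a,v,m}=\pi_{a,m}+\bar\eta_{a,v,m}$ and $\bar Y_{a,v,m}=\beta\,\bar S_{a,v,m}+\bar\epsilon_{a,v,m}$, where for each $m$ the pairs $(\bar\eta_{a,v,m},\bar\epsilon_{a,v,m})$, $a\le K_m$, $v\in\{0,1\}$, are i.i.d. with mean zero (the two components of a pair may be correlated), $\sigma^2_{\bar\eta,m}=E\bar\eta_{a,v,m}^2>0$ and $\sigma^2_{\bar\epsilon,m}=E\bar\epsilon_{a,v,m}^2>0$. Let $\widehat\beta_m=\big(\sum_{a=1}^{K_m}\bar S_{a,0,m}\bar S_{a,1,m}\big)^{-1}\sum_{a=1}^{K_m}\bar S_{a,0,m}\bar Y_{a,1,m}$. Assume: (a) $\frac{\sum_{a=1}^{K_m}\pi_{a,m}^2}{K_m\sigma^2_{\bar\eta,m}}\to0$, $\frac{\sigma_{\bar\epsilon,m}}{\sigma_{\bar\eta,m}}\to c\in[0,\infty)$, and $\frac{\sum_{a=1}^{K_m}\pi_{a,m}^2}{\sqrt{K_m}\,\sigma^2_{\bar\eta,m}}\to\infty$; (b) (Lindeberg) for every $\epsilon>0$, $E\Big[\Big(\frac{\bar\eta_{1,0,m}\bar\epsilon_{1,1,m}}{\sigma_{\bar\eta,m}\sigma_{\bar\epsilon,m}}\Big)^2\mathbf 1\Big\{\Big|\frac{\bar\eta_{1,0,m}\bar\epsilon_{1,1,m}}{\sigma_{\bar\eta,m}\sigma_{\bar\epsilon,m}}\Big|\ge\epsilon\sqrt{K_m}\Big\}\Big]\to0$.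 Let $\widehat\sigma_{\bar\eta,m},\widehat\sigma_{\bar\epsilon,m}$ satisfy $\widehat\sigma_{\bar\eta,m}/\sigma_{\bar\eta,m}\to1$ and $\widehat\sigma_{\bar\epsilon,m}/\sigma_{\bar\epsilon,m}\to1$ in probability, let $\alpha\in(0,1)$, $q_{1-\alpha/2}$ the $1-\alpha/2$ quantile of the standard normal distribution, and $\mathcal C_m=\Big[\widehat\beta_m\pm q_{1-\alpha/2}\Big(\frac{\sum_{a=1}^{K_m}\bar S_{a,0,m}\bar S_{a,1,m}}{\sqrt{K_m}}\Big)^{-1}\widehat\sigma_{\bar\eta,m}\widehat\sigma_{\bar\epsilon,m}\Big]$. Then $\Pr_m[\beta\in\mathcal C_m]\to1-\alpha$ and $\widehat\beta_m\to\beta$ in probability.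
   Context: This is the two-fold jackknife instrumental variable estimator in a linear model with one endogenous variable: units in each cell are split into two folds of equal size, $\bar S_{a,v,m}$ and $\bar Y_{a,v,m}$ are the averages of the short-term metric and long-term outcome over the units of cell $a$ in fold $v$, $\pi_{a,m}$ is the (nonrandom) first-stage effect of cell $a$ under the $m$-th process, and $\bar\eta_{a,v,m},\bar\epsilon_{a,v,m}$ are the corresponding fold-level error averages (homoskedastic, i.i.d. across cells and folds since unit-level errors are i.i.d.). *)

theory Defs
  imports "HOL-Probability.Probability"
begin

definition std_normal_cdf :: "real \<Rightarrow> real" where
  "std_normal_cdf x = measure (density lborel std_normal_density) {..x}"

definition conv_in_prob :: "(nat \<Rightarrow> 'w measure) \<Rightarrow> (nat \<Rightarrow> 'w \<Rightarrow> real) \<Rightarrow> real \<Rightarrow> bool" where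
  "conv_in_prob M X c \<longleftrightarrow>
     (\<forall>e>0. (\<lambda>m. measure (M m) {\<omega> \<in> space (M m). \<bar>X m \<omega> - c\<bar> > e}) \<longlonglongrightarrow> 0)"

definition Sbar :: "(nat \<Rightarrow> nat \<Rightarrow> real) \<Rightarrow> (nat \<Rightarrow> nat \<Rightarrow> nat \<Rightarrow> 'w \<Rightarrow> real)
                     \<Rightarrow> nat \<Rightarrow> nat \<Rightarrow> nat \<Rightarrow> 'w \<Rightarrow> real" where
  "Sbar fs eta m a v \<omega> = fs m a + eta m a v \<omega>"

definition Ybar :: "real \<Rightarrow> (nat \<Rightarrow> nat \<Rightarrow> real) \<Rightarrow> (nat \<Rightarrow> nat \<Rightarrow> nat \<Rightarrow> 'w \<Rightarrow> real)
                     \<Rightarrow> (nat \<Rightarrow> nat \<Rightarrow> nat \<Rightarrow> 'w \<Rightarrow> real) \<Rightarrow> nat \<Rightarrow> nat \<Rightarrow> nat \<Rightarrow> 'w \<Rightarrow> real" where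
  "Ybar \<beta> fs eta eps m a v \<omega> = \<beta> * Sbar fs eta m a v \<omega> + eps m a v \<omega>"

definition jive_den :: "(nat \<Rightarrow> nat) \<Rightarrow> (nat \<Rightarrow> nat \<Rightarrow> real) \<Rightarrow> (nat \<Rightarrow> nat \<Rightarrow> nat \<Rightarrow> 'w \<Rightarrow> real)
                         \<Rightarrow> nat \<Rightarrow> 'w \<Rightarrow> real" where
  "jive_den K fs eta m \<omega> = (\<Sum>a = 1..K m. Sbar fs eta m a 0 \<omega> * Sbar fs eta m a 1 \<omega>)"

text \<open>Two-fold jackknife IV estimator (x / 0 = 0 in Isabelle).\<close>
definition beta_hat :: "(nat \<Rightarrow> nat) \<Rightarrow> real \<Rightarrow> (nat \<Rightarrow> nat \<Rightarrow> real) \<Rightarrow> (nat \<Rightarrow> nat \<Rightarrow> nat \<Rightarrow> 'w \<Rightarrow> real)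
                         \<Rightarrow> (nat \<Rightarrow> nat \<Rightarrow> nat \<Rightarrow> 'w \<Rightarrow> real) \<Rightarrow> nat \<Rightarrow> 'w \<Rightarrow> real" where
  "beta_hat K \<beta> fs eta eps m \<omega> =
     (\<Sum>a = 1..K m. Sbar fs eta m a 0 \<omega> * Ybar \<beta> fs eta eps m a 1 \<omega>) / jive_den K fs eta m \<omega>"

definition sig_eta :: "(nat \<Rightarrow> 'w measure) \<Rightarrow> (nat \<Rightarrow> nat \<Rightarrow> nat \<Rightarrow> 'w \<Rightarrow> real) \<Rightarrow> nat \<Rightarrow> real" where
  "sig_eta M eta m = sqrt (LINT \<omega>|M m. (eta m 1 0 \<omega>)\<^sup>2)"

definition sig_eps :: "(nat \<Rightarrow> 'w measure) \<Rightarrow> (nat \<Rightarrow> nat \<Rightarrow> nat \<Rightarrow> 'w \<Rightarrow> real) \<Rightarrow> nat \<Rightarrow> real" where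
  "sig_eps M eps m = sqrt (LINT \<omega>|M m. (eps m 1 0 \<omega>)\<^sup>2)"

text \<open>Event beta in C_m, with C_m = [beta_hat - h, beta_hat + h] read as the closed
  interval of half-width |h|, h = q * (den / sqrt K)^{-1} * sh_eta * sh_eps.\<close>
definition in_CI :: "(nat \<Rightarrow> nat) \<Rightarrow> real \<Rightarrow> (nat \<Rightarrow> nat \<Rightarrow> real) \<Rightarrow> (nat \<Rightarrow> nat \<Rightarrow> nat \<Rightarrow> 'w \<Rightarrow> real)
       \<Rightarrow> (nat \<Rightarrow> nat \<Rightarrow> nat \<Rightarrow> 'w \<Rightarrow> real) \<Rightarrow> (nat \<Rightarrow> 'w \<Rightarrow> real) \<Rightarrow> (nat \<Rightarrow> 'w \<Rightarrow> real)
       \<Rightarrow> real \<Rightarrow> nat \<Rightarrow> 'w \<Rightarrow> bool" where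
  "in_CI K \<beta> fs eta eps sh_eta sh_eps q m \<omega> \<longleftrightarrow>
     \<bar>\<beta> - beta_hat K \<beta> fs eta eps m \<omega>\<bar> \<le>
       \<bar>q * inverse (jive_den K fs eta m \<omega> / sqrt (real (K m))) * sh_eta m \<omega> * sh_eps m \<omega>\<bar>"

end

theory Submission
  imports Defs
begin

text \<open>
  Write \<open>S = \<pi> + \<eta>\<close> and \<open>Y = \<beta> S + \<epsilon>\<close>. Then \<open>\<beta>_hat - \<beta> = (A + B) / (\<Pi> + C + D)\<close>, where
  \<open>\<Pi> = \<Sum>\<pi>\<^sub>a\<^sup>2\<close> is the signal and \<open>A = \<Sum>\<pi>\<^sub>a \<epsilon>\<^sub>a\<^sub>1\<close>, \<open>B = \<Sum>\<eta>\<^sub>a\<^sub>0 \<epsilon>\<^sub>a\<^sub>1\<close>,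
  \<open>C = \<Sum>\<pi>\<^sub>a (\<eta>\<^sub>a\<^sub>0 + \<eta>\<^sub>a\<^sub>1)\<close>, \<open>D = \<Sum>\<eta>\<^sub>a\<^sub>0 \<eta>\<^sub>a\<^sub>1\<close> are centred noise sums. Because the two
  folds are independent, each is a sum of independent centred terms, with second moments
  \<open>\<Pi> \<sigma>\<^sub>\<epsilon>\<^sup>2\<close>, \<open>K \<sigma>\<^sub>\<eta>\<^sup>2 \<sigma>\<^sub>\<epsilon>\<^sup>2\<close>, \<open>2 \<Pi> \<sigma>\<^sub>\<eta>\<^sup>2\<close> and \<open>K \<sigma>\<^sub>\<eta>\<^sup>4\<close>. Since \<open>\<Pi> / (\<surd>K \<sigma>\<^sub>\<eta>\<^sup>2) \<rightarrow> \<infinity>\<close>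
  and \<open>\<sigma>\<^sub>\<epsilon> / \<sigma>\<^sub>\<eta>\<close> stays bounded, Chebyshev's inequality makes \<open>A, B, C, D\<close> negligible
  against \<open>\<Pi>\<close>, which gives consistency, while \<open>\<Pi> / (K \<sigma>\<^sub>\<eta>\<^sup>2) \<rightarrow> 0\<close> makes \<open>A\<close> negligible against \<open>\<surd>K \<sigma>\<^sub>\<eta> \<sigma>\<^sub>\<epsilon>\<close>.
  The cross-fold products \<open>\<eta>\<^sub>a\<^sub>0 \<epsilon>\<^sub>a\<^sub>1\<close> are i.i.d. over cells, so by the Lindeberg condition
  \<open>Z = B / (\<surd>K \<sigma>\<^sub>\<eta> \<sigma>\<^sub>\<epsilon>)\<close> is asymptotically standard normal. Finally \<open>\<beta>\<close> lies in the
  interval iff \<open>\<bar>A + B\<bar> \<le> q \<surd>K \<bar>\<sigma>_hat\<^sub>\<eta> \<sigma>_hat\<^sub>\<epsilon>\<bar>\<close>; up to events of vanishing probability this is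
  squeezed between \<open>\<bar>Z\<bar> \<le> q - r\<close> and \<open>\<bar>Z\<bar> \<le> q + r\<close>, so the coverage tends to
  \<open>2 \<Phi>(q) - 1 = 1 - \<alpha>\<close>.
\<close>

section \<open>Independence across cells and folds\<close>

context prob_space
begin

lemma indep_vars_cells:
  fixes X :: "'i \<times> nat \<Rightarrow> 'a \<Rightarrow> 'b" and H :: "'i \<Rightarrow> 'b \<Rightarrow> 'b \<Rightarrow> real"
  assumes indep: "indep_vars (\<lambda>_. N) X (I \<times> {0,1})"
    and H: "\<And>a. a \<in> I \<Longrightarrow> (\<lambda>(x, y). H a x y) \<in> borel_measurable (N \<Otimes>\<^sub>M N)"
  shows "indep_vars (\<lambda>_. borel) (\<lambda>a \<omega>. H a (X (a, 0) \<omega>) (X (a, 1) \<omega>)) I"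
proof -
  have cells: "indep_vars (\<lambda>a. PiM ({a} \<times> {0,1}) (\<lambda>_. N))
      (\<lambda>a \<omega>. restrict (\<lambda>i. X i \<omega>) ({a} \<times> {0,1})) I"
    by (rule indep_vars_restrict[OF indep]) (auto simp: disjoint_family_on_def)
  have "(\<lambda>g. H a (g (a, 0)) (g (a, 1))) \<in> borel_measurable (PiM ({a} \<times> {0,1}) (\<lambda>_. N))"
    if "a \<in> I" for a
  proof -
    have "(\<lambda>g. (g (a, 0), g (a, 1))) \<in> PiM ({a} \<times> {0,1}) (\<lambda>_. N) \<rightarrow>\<^sub>M N \<Otimes>\<^sub>M N"
      by (intro measurable_Pair measurable_component_singleton) auto
    from measurable_compose[OF this H[OF that]] show ?thesis
      by (simp add: comp_def)
  qed
  from indep_vars_compose2[OF cells this] show ?thesis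
    by simp
qed

lemma indep_var_folds:
  fixes X :: "'i \<times> nat \<Rightarrow> 'a \<Rightarrow> 'b"
  assumes indep: "indep_vars (\<lambda>_. N) X (I \<times> {0,1})" and a: "a \<in> I"
    and f: "f \<in> N \<rightarrow>\<^sub>M borel" and g: "g \<in> N \<rightarrow>\<^sub>M borel"
  shows "indep_var borel (\<lambda>\<omega>. f (X (a, 0) \<omega>)) borel (\<lambda>\<omega>. g (X (a, 1) \<omega>))"
proof -
  have folds: "indep_var (PiM {(a, 0)} (\<lambda>_. N)) (\<lambda>\<omega>. restrict (\<lambda>i. X i \<omega>) {(a, 0)})
      (PiM {(a, 1)} (\<lambda>_. N)) (\<lambda>\<omega>. restrict (\<lambda>i. X i \<omega>) {(a, 1)})"
    by (rule indep_var_restrict[OF indep]) (use a in auto)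
  have f': "(\<lambda>h. f (h (a, 0))) \<in> borel_measurable (PiM {(a, 0)} (\<lambda>_. N))"
    using measurable_compose[OF measurable_component_singleton[of "(a, 0)" "{(a, 0)}" "\<lambda>_. N"] f]
    by (simp add: comp_def)
  have g': "(\<lambda>h. g (h (a, 1))) \<in> borel_measurable (PiM {(a, 1)} (\<lambda>_. N))"
    using measurable_compose[OF measurable_component_singleton[of "(a, 1)" "{(a, 1)}" "\<lambda>_. N"] g]
    by (simp add: comp_def)
  from indep_var_compose[OF folds f' g'] show ?thesis
    by (simp add: comp_def)
qed

lemma distr_pair_eq_if_indep_var:
  assumes "indep_var S X T Y" "indep_var S X' T Y'"
    and "distr M S X = distr M S X'" "distr M T Y = distr M T Y'"
  shows "distr M (S \<Otimes>\<^sub>M T) (\<lambda>\<omega>. (X \<omega>, Y \<omega>)) = distr M (S \<Otimes>\<^sub>M T) (\<lambda>\<omega>. (X' \<omega>, Y' \<omega>))"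
  using assms by (simp add: indep_var_distribution_eq)

lemma second_moment_sum_indep:
  fixes Z :: "'i \<Rightarrow> 'a \<Rightarrow> real"
  assumes fin: "finite A" and indep: "indep_vars (\<lambda>_. borel) Z A"
    and int: "\<And>a. a \<in> A \<Longrightarrow> integrable M (Z a)"
    and mean: "\<And>a. a \<in> A \<Longrightarrow> expectation (Z a) = 0"
    and sq: "\<And>a. a \<in> A \<Longrightarrow> integrable M (\<lambda>\<omega>. (Z a \<omega>)\<^sup>2)"
  shows "integrable M (\<lambda>\<omega>. (\<Sum>a\<in>A. Z a \<omega>)\<^sup>2)"
    and "expectation (\<lambda>\<omega>. (\<Sum>a\<in>A. Z a \<omega>)\<^sup>2) = (\<Sum>a\<in>A. expectation (\<lambda>\<omega>. (Z a \<omega>)\<^sup>2))"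
proof -
  have pair: "indep_var borel (Z a) borel (Z b)" if "a \<in> A" "b \<in> A" "a \<noteq> b" for a b
    using indep_var_compose[OF indep_var_restrict[OF indep, of "{a}" "{b}"]
        measurable_component_singleton measurable_component_singleton] that
    by (simp add: comp_def)
  have prod_int: "integrable M (\<lambda>\<omega>. Z a \<omega> * Z b \<omega>)" if "a \<in> A" "b \<in> A" for a b
    using sq[of a] indep_var_integrable[OF pair int int] that
    by (cases "a = b") (auto simp: power2_eq_square)
  have prod_exp: "expectation (\<lambda>\<omega>. Z a \<omega> * Z b \<omega>) =
      (if a = b then expectation (\<lambda>\<omega>. (Z a \<omega>)\<^sup>2) else 0)" if "a \<in> A" "b \<in> A" for a b
    using indep_var_lebesgue_integral[OF pair int int] that mean
    by (cases "a = b") (auto simp: power2_eq_square)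
  have square: "(\<lambda>\<omega>. (\<Sum>a\<in>A. Z a \<omega>)\<^sup>2) = (\<lambda>\<omega>. \<Sum>a\<in>A. \<Sum>b\<in>A. Z a \<omega> * Z b \<omega>)"
    by (simp add: power2_eq_square sum_product)
  show "integrable M (\<lambda>\<omega>. (\<Sum>a\<in>A. Z a \<omega>)\<^sup>2)"
    unfolding square using prod_int by auto
  have "expectation (\<lambda>\<omega>. (\<Sum>a\<in>A. Z a \<omega>)\<^sup>2) = (\<Sum>a\<in>A. \<Sum>b\<in>A. expectation (\<lambda>\<omega>. Z a \<omega> * Z b \<omega>))"
    unfolding square using prod_int by (simp add: Bochner_Integration.integral_sum)
  also have "\<dots> = (\<Sum>a\<in>A. expectation (\<lambda>\<omega>. (Z a \<omega>)\<^sup>2))"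
    using fin by (simp add: prod_exp cong: sum.cong)
  finally show "expectation (\<lambda>\<omega>. (\<Sum>a\<in>A. Z a \<omega>)\<^sup>2) = (\<Sum>a\<in>A. expectation (\<lambda>\<omega>. (Z a \<omega>)\<^sup>2))" .
qed

end

section \<open>A Lindeberg central limit theorem for i.i.d. triangular arrays\<close>

lemma (in real_distribution) expectation_min_square_cube_le:
  assumes sq: "integrable M (\<lambda>x. x\<^sup>2)" and var: "expectation (\<lambda>x. x\<^sup>2) = 1"
    and e: "0 < e" and s: "0 < s"
  shows "expectation (\<lambda>x. min (6 * x\<^sup>2) (\<bar>t / s\<bar> * \<bar>x\<bar> ^ 3))
    \<le> 6 * expectation (\<lambda>x. x\<^sup>2 * indicator {x. \<bar>x\<bar> \<ge> e * s} x) + \<bar>t\<bar> * e"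
proof -
  have tail_int: "integrable M (\<lambda>x. x\<^sup>2 * indicator {x. \<bar>x\<bar> \<ge> e * s} x)"
    by (rule Bochner_Integration.integrable_bound[OF sq]) (auto simp: indicator_def)
  have min_int: "integrable M (\<lambda>x. min (6 * x\<^sup>2) (\<bar>t / s\<bar> * \<bar>x\<bar> ^ 3))"
    by (rule Bochner_Integration.integrable_bound[of _ "\<lambda>x. 6 * x\<^sup>2"]) (use sq in auto)
  have pointwise: "min (6 * x\<^sup>2) (\<bar>t / s\<bar> * \<bar>x\<bar> ^ 3)
      \<le> 6 * (x\<^sup>2 * indicator {x. \<bar>x\<bar> \<ge> e * s} x) + \<bar>t\<bar> * e * x\<^sup>2" for x
  proof (cases "\<bar>x\<bar> \<ge> e * s")
    case True
    then show ?thesis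
      using e by (simp add: min_le_iff_disj)
  next
    case False
    have "\<bar>t / s\<bar> * \<bar>x\<bar> ^ 3 = \<bar>t\<bar> * x\<^sup>2 * (\<bar>x\<bar> / s)"
      using s by (simp add: power2_eq_square power3_eq_cube)
    also have "\<dots> \<le> \<bar>t\<bar> * x\<^sup>2 * e"
      using False s by (intro mult_left_mono) (auto simp: divide_le_eq mult.commute)
    finally show ?thesis
      using False by (simp add: min_le_iff_disj mult_ac)
  qed
  have "expectation (\<lambda>x. min (6 * x\<^sup>2) (\<bar>t / s\<bar> * \<bar>x\<bar> ^ 3))
      \<le> expectation (\<lambda>x. 6 * (x\<^sup>2 * indicator {x. \<bar>x\<bar> \<ge> e * s} x) + \<bar>t\<bar> * e * x\<^sup>2)"
    by (rule integral_mono[OF min_int _ pointwise]) (use tail_int sq in auto)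
  also have "\<dots> = 6 * expectation (\<lambda>x. x\<^sup>2 * indicator {x. \<bar>x\<bar> \<ge> e * s} x) + \<bar>t\<bar> * e"
    using tail_int sq var by simp
  finally show ?thesis .
qed

lemma tendsto_expectation_min_square_cube:
  fixes \<mu> :: "nat \<Rightarrow> real measure" and s :: "nat \<Rightarrow> real"
  assumes \<mu>: "\<And>m. real_distribution (\<mu> m)"
    and sq: "\<And>m. integrable (\<mu> m) (\<lambda>x. x\<^sup>2)" and var: "\<And>m. (LINT x|\<mu> m. x\<^sup>2) = 1"
    and s: "\<forall>\<^sub>F m in sequentially. 0 < s m"
    and lindeberg: "\<And>e. 0 < e \<Longrightarrow>
      (\<lambda>m. LINT x|\<mu> m. x\<^sup>2 * indicator {x. \<bar>x\<bar> \<ge> e * s m} x) \<longlonglongrightarrow> 0"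
  shows "(\<lambda>m. LINT x|\<mu> m. min (6 * x\<^sup>2) (\<bar>t / s m\<bar> * \<bar>x\<bar> ^ 3)) \<longlonglongrightarrow> 0"
proof (rule tendstoI)
  fix r :: real
  assume r: "0 < r"
  define e where "e = r / (2 * (\<bar>t\<bar> + 1))"
  have e: "0 < e"
    using r by (simp add: e_def)
  have "\<bar>t\<bar> * e < (\<bar>t\<bar> + 1) * e"
    using e by simp
  also have "\<dots> = r / 2"
    by (simp add: e_def add_pos_nonneg field_simps)
  finally have te: "\<bar>t\<bar> * e < r / 2" .
  have "\<forall>\<^sub>F m in sequentially. (LINT x|\<mu> m. x\<^sup>2 * indicator {x. \<bar>x\<bar> \<ge> e * s m} x) < r / 12"
    by (rule order_tendstoD(2)[OF lindeberg[OF e]]) (use r in simp)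
  with s show "\<forall>\<^sub>F m in sequentially.
      dist (LINT x|\<mu> m. min (6 * x\<^sup>2) (\<bar>t / s m\<bar> * \<bar>x\<bar> ^ 3)) 0 < r"
  proof eventually_elim
    case (elim m)
    interpret real_distribution "\<mu> m"
      by (rule \<mu>)
    have "expectation (\<lambda>x. min (6 * x\<^sup>2) (\<bar>t / s m\<bar> * \<bar>x\<bar> ^ 3))
        \<le> 6 * expectation (\<lambda>x. x\<^sup>2 * indicator {x. \<bar>x\<bar> \<ge> e * s m} x) + \<bar>t\<bar> * e"
      by (rule expectation_min_square_cube_le[OF sq var e elim(1)])
    moreover have "0 \<le> expectation (\<lambda>x. min (6 * x\<^sup>2) (\<bar>t / s m\<bar> * \<bar>x\<bar> ^ 3))"
      by (rule integral_nonneg_AE) simp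
    ultimately show ?case
      using elim(2) te by (simp add: dist_real_def)
  qed
qed

lemma (in prob_space) char_distr_iid_sum:
  fixes X :: "'i \<Rightarrow> 'a \<Rightarrow> real" and \<mu> :: "real measure"
  assumes indep: "indep_vars (\<lambda>_. borel) X I" and law: "\<And>i. i \<in> I \<Longrightarrow> distr M borel (X i) = \<mu>"
  shows "char (distr M borel (\<lambda>\<omega>. (\<Sum>i\<in>I. X i \<omega>) / c)) t = char \<mu> (t / c) ^ card I"
proof -
  have [measurable]: "X i \<in> borel_measurable M" if "i \<in> I" for i
    using indep that by (simp add: indep_vars_def2)
  have char_scaled: "char (distr M borel (\<lambda>\<omega>. X i \<omega> / c)) t = char \<mu> (t / c)" if "i \<in> I" for i
    using that by (simp add: char_def integral_distr flip: law)
  have "char (distr M borel (\<lambda>\<omega>. (\<Sum>i\<in>I. X i \<omega>) / c)) t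
      = char (distr M borel (\<lambda>\<omega>. \<Sum>i\<in>I. X i \<omega> / c)) t"
    by (simp add: sum_divide_distrib)
  also have "\<dots> = (\<Prod>i\<in>I. char (distr M borel (\<lambda>\<omega>. X i \<omega> / c)) t)"
    by (rule char_distr_sum[OF indep_vars_compose2[OF indep]]) simp
  also have "\<dots> = char \<mu> (t / c) ^ card I"
    by (simp add: char_scaled cong: prod.cong)
  finally show ?thesis .
qed

lemma (in prob_space) char_distr_iid_sum_approx:
  fixes X :: "'i \<Rightarrow> 'a \<Rightarrow> real" and \<mu> :: "real measure"
  assumes indep: "indep_vars (\<lambda>_. borel) X I" and fin: "finite I" and ne: "I \<noteq> {}"
    and law: "\<And>i. i \<in> I \<Longrightarrow> distr M borel (X i) = \<mu>"
    and int: "integrable \<mu> (\<lambda>x. x)" and mean: "(LINT x|\<mu>. x) = 0"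
    and sq: "integrable \<mu> (\<lambda>x. x\<^sup>2)" and var: "(LINT x|\<mu>. x\<^sup>2) = 1"
    and t: "t\<^sup>2 / 4 \<le> card I"
  shows "cmod (char (distr M borel (\<lambda>\<omega>. (\<Sum>i\<in>I. X i \<omega>) / sqrt (card I))) t
      - complex_of_real ((1 + (- (t\<^sup>2) / 2) / card I) ^ card I))
    \<le> t\<^sup>2 / 6 * (LINT x|\<mu>. min (6 * x\<^sup>2) (\<bar>t / sqrt (card I)\<bar> * \<bar>x\<bar> ^ 3))"
proof -
  define n where "n = card I"
  define u where "u = t / sqrt n"
  have n: "1 \<le> n"
    using fin ne by (simp add: n_def Suc_le_eq card_gt_0_iff)
  have u2: "u\<^sup>2 = t\<^sup>2 / n"
    using n by (simp add: u_def power_divide)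
  obtain i0 where "i0 \<in> I"
    using ne by blast
  then interpret \<mu>: real_distribution \<mu>
    using indep law[of i0] by (auto simp: indep_vars_def2 simp flip: law)
  have char_sum: "char (distr M borel (\<lambda>\<omega>. (\<Sum>i\<in>I. X i \<omega>) / sqrt n)) t = char \<mu> u ^ n"
    using char_distr_iid_sum[OF indep law, of "sqrt n" t] by (simp add: n_def u_def)
  have "cmod (char \<mu> u - (1 - u\<^sup>2 * 1 / 2))
      \<le> u\<^sup>2 / 6 * \<mu>.expectation (\<lambda>x. min (6 * x\<^sup>2) (\<bar>u\<bar> * \<bar>x\<bar> ^ 3))"
    by (rule \<mu>.char_approx3) (use int mean sq var in simp_all)
  then have one_factor: "cmod (char \<mu> u - complex_of_real (1 + (- (t\<^sup>2) / 2) / n))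
      \<le> u\<^sup>2 / 6 * \<mu>.expectation (\<lambda>x. min (6 * x\<^sup>2) (\<bar>u\<bar> * \<bar>x\<bar> ^ 3))"
    by (simp add: u2 diff_divide_distrib mult.commute)
  have "t\<^sup>2 / 2 / n \<le> 2"
    using t n by (simp add: n_def divide_le_eq)
  then have "cmod (complex_of_real (1 + (- (t\<^sup>2) / 2) / n)) \<le> 1"
    by (simp only: norm_of_real) (simp add: abs_le_iff)
  then have "cmod (char \<mu> u ^ n - complex_of_real (1 + (- (t\<^sup>2) / 2) / n) ^ n)
      \<le> n * cmod (char \<mu> u - complex_of_real (1 + (- (t\<^sup>2) / 2) / n))"
    by (intro norm_power_diff \<mu>.cmod_char_le_1)
  also have "\<dots> \<le> n * (u\<^sup>2 / 6 * \<mu>.expectation (\<lambda>x. min (6 * x\<^sup>2) (\<bar>u\<bar> * \<bar>x\<bar> ^ 3)))"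
    by (rule mult_left_mono[OF one_factor]) simp
  also have "\<dots> = t\<^sup>2 / 6 * \<mu>.expectation (\<lambda>x. min (6 * x\<^sup>2) (\<bar>u\<bar> * \<bar>x\<bar> ^ 3))"
    using n by (simp add: u2)
  finally show ?thesis
    unfolding n_def[symmetric] u_def[symmetric] char_sum by simp
qed

theorem clt_iid_triangular_array:
  fixes M :: "nat \<Rightarrow> 'a measure" and X :: "nat \<Rightarrow> 'i \<Rightarrow> 'a \<Rightarrow> real"
    and I :: "nat \<Rightarrow> 'i set" and \<mu> :: "nat \<Rightarrow> real measure"
  assumes M: "\<And>m. prob_space (M m)"
    and indep: "\<And>m. prob_space.indep_vars (M m) (\<lambda>_. borel) (X m) (I m)"
    and fin: "\<And>m. finite (I m)" and card: "filterlim (\<lambda>m. card (I m)) at_top sequentially"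
    and law: "\<And>m i. i \<in> I m \<Longrightarrow> distr (M m) borel (X m i) = \<mu> m"
    and \<mu>: "\<And>m. real_distribution (\<mu> m)"
    and int: "\<And>m. integrable (\<mu> m) (\<lambda>x. x)" and mean: "\<And>m. (LINT x|\<mu> m. x) = 0"
    and sq: "\<And>m. integrable (\<mu> m) (\<lambda>x. x\<^sup>2)" and var: "\<And>m. (LINT x|\<mu> m. x\<^sup>2) = 1"
    and lindeberg: "\<And>e. 0 < e \<Longrightarrow>
      (\<lambda>m. LINT x|\<mu> m. x\<^sup>2 * indicator {x. \<bar>x\<bar> \<ge> e * sqrt (card (I m))} x) \<longlonglongrightarrow> 0"
  shows "weak_conv_m (\<lambda>m. distr (M m) borel (\<lambda>\<omega>. (\<Sum>i\<in>I m. X m i \<omega>) / sqrt (card (I m))))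
    std_normal_distribution"
proof (rule levy_continuity)
  show "real_distribution (distr (M m) borel (\<lambda>\<omega>. (\<Sum>i\<in>I m. X m i \<omega>) / sqrt (card (I m))))"
    for m
  proof (rule prob_space.real_distribution_distr[OF M])
    have "X m i \<in> borel_measurable (M m)" if "i \<in> I m" for i
      using indep[of m] that by (simp add: prob_space.indep_vars_def2[OF M])
    then show "(\<lambda>\<omega>. (\<Sum>i\<in>I m. X m i \<omega>) / sqrt (card (I m))) \<in> borel_measurable (M m)"
      by (intro borel_measurable_divide borel_measurable_sum) auto
  qed
next
  fix t :: real
  have card_real: "filterlim (\<lambda>m. real (card (I m))) at_top sequentially"
    by (rule filterlim_compose[OF filterlim_real_sequentially card])
  have large: "\<forall>\<^sub>F m in sequentially. max 1 (t\<^sup>2 / 4) \<le> real (card (I m))"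
    using card_real by (simp only: filterlim_at_top)
  then have sqrt_pos: "\<forall>\<^sub>F m in sequentially. 0 < sqrt (card (I m))"
    by eventually_elim simp
  have err: "(\<lambda>m. t\<^sup>2 / 6 * (LINT x|\<mu> m. min (6 * x\<^sup>2) (\<bar>t / sqrt (card (I m))\<bar> * \<bar>x\<bar> ^ 3)))
      \<longlonglongrightarrow> 0"
    using tendsto_mult_right_zero[OF
        tendsto_expectation_min_square_cube[OF \<mu> sq var sqrt_pos lindeberg]]
    by simp
  from large have approx: "\<forall>\<^sub>F m in sequentially.
      cmod (char (distr (M m) borel (\<lambda>\<omega>. (\<Sum>i\<in>I m. X m i \<omega>) / sqrt (card (I m)))) t
        - complex_of_real ((1 + (- (t\<^sup>2) / 2) / card (I m)) ^ card (I m)))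
      \<le> t\<^sup>2 / 6 * (LINT x|\<mu> m. min (6 * x\<^sup>2) (\<bar>t / sqrt (card (I m))\<bar> * \<bar>x\<bar> ^ 3))"
  proof eventually_elim
    case (elim m)
    then have "I m \<noteq> {}"
      by auto
    then show ?case
      using prob_space.char_distr_iid_sum_approx[OF M indep fin _ law int mean sq var] elim
      by simp
  qed
  have "(\<lambda>m. complex_of_real ((1 + (- (t\<^sup>2) / 2) / card (I m)) ^ card (I m)))
      \<longlonglongrightarrow> complex_of_real (exp (- (t\<^sup>2) / 2))"
    by (intro tendsto_of_real filterlim_compose[OF tendsto_exp_limit_sequentially card])
  then have "(\<lambda>m. char (distr (M m) borel (\<lambda>\<omega>. (\<Sum>i\<in>I m. X m i \<omega>) / sqrt (card (I m)))) t)
      \<longlonglongrightarrow> complex_of_real (exp (- (t\<^sup>2) / 2))"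
    by (rule Lim_transform[OF _ Lim_null_comparison[OF approx err]])
  then show "(\<lambda>m. char (distr (M m) borel (\<lambda>\<omega>. (\<Sum>i\<in>I m. X m i \<omega>) / sqrt (card (I m)))) t)
      \<longlonglongrightarrow> char std_normal_distribution t"
    by (simp add: char_std_normal_distribution)
qed (rule real_dist_normal_dist)

section \<open>The standard normal distribution\<close>

lemma emeasure_std_normal_finite:
  assumes "finite A"
  shows "emeasure std_normal_distribution A = 0"
proof -
  have "A \<in> null_sets lborel"
    using assms by (rule finite_imp_null_set_lborel)
  then have "AE x in lborel. x \<in> A \<longrightarrow> ennreal (std_normal_density x) = 0"
    by (rule AE_not_in[THEN eventually_mono]) simp
  then have "A \<in> null_sets std_normal_distribution"
    using \<open>A \<in> null_sets lborel\<close> by (subst null_sets_density_iff) auto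
  then show ?thesis
    by auto
qed

lemma measure_std_normal_finite: "finite A \<Longrightarrow> measure std_normal_distribution A = 0"
  by (simp add: measure_def emeasure_std_normal_finite)

lemma std_normal_cdf_eq_cdf: "std_normal_cdf = cdf std_normal_distribution"
  by (simp add: fun_eq_iff std_normal_cdf_def cdf_def)

lemma isCont_std_normal_cdf: "isCont std_normal_cdf x"
proof -
  interpret real_distribution std_normal_distribution
    by (rule real_dist_normal_dist)
  show ?thesis
    by (simp add: std_normal_cdf_eq_cdf isCont_cdf measure_std_normal_finite)
qed

lemma distr_std_normal_uminus:
  "distr std_normal_distribution borel uminus = std_normal_distribution"
proof -
  have "density (distr lborel borel uminus) std_normal_density
      = distr (density lborel (\<lambda>x. std_normal_density (- x))) borel uminus"
    by (rule density_distr) auto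
  then show ?thesis
    by (simp add: lborel_distr_uminus std_normal_density_def)
qed

lemma std_normal_cdf_minus: "std_normal_cdf (- x) = 1 - std_normal_cdf x"
proof -
  interpret real_distribution std_normal_distribution
    by (rule real_dist_normal_dist)
  have "std_normal_cdf (- x) = measure (distr std_normal_distribution borel uminus) {..- x}"
    by (simp add: std_normal_cdf_def distr_std_normal_uminus)
  also have "\<dots> = prob {x..}"
    by (subst measure_distr) (auto intro!: arg_cong[where f = prob])
  also have "{x..} = UNIV - {..<x}"
    by auto
  also have "prob (UNIV - {..<x}) = 1 - prob {..<x}"
    using prob_compl[of "{..<x}"] by simp
  also have "prob {..<x} = prob ({..<x} \<union> {x}) - prob {x}"
    by (subst finite_measure_Union) auto
  also have "{..<x} \<union> {x} = {..x}"
    by auto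
  finally show ?thesis
    by (simp add: std_normal_cdf_def measure_std_normal_finite)
qed

lemma measure_std_normal_symmetric_interval:
  assumes "0 \<le> x"
  shows "measure std_normal_distribution {-x..x} = 2 * std_normal_cdf x - 1"
proof -
  interpret real_distribution std_normal_distribution
    by (rule real_dist_normal_dist)
  have "{..< -x} \<union> {-x..x} = {..x}"
    using assms by auto
  then have "std_normal_cdf x = prob ({..< -x} \<union> {-x..x})"
    by (simp add: std_normal_cdf_def)
  also have "\<dots> = prob {..< -x} + prob {-x..x}"
    by (rule finite_measure_Union) auto
  also have "prob {..< -x} = prob ({..< -x} \<union> {-x})"
    by (subst finite_measure_Union) (auto simp: measure_std_normal_finite)
  also have "{..< -x} \<union> {-x} = {..-x}"
    by auto
  finally show ?thesis
    by (simp add: std_normal_cdf_def[symmetric] std_normal_cdf_minus)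
qed

lemma weak_conv_std_normal_symmetric_interval:
  assumes \<mu>: "\<And>n. real_distribution (\<mu> n)" and conv: "weak_conv_m \<mu> std_normal_distribution"
    and x: "0 \<le> x"
  shows "(\<lambda>n. measure (\<mu> n) {-x..x}) \<longlonglongrightarrow> 2 * std_normal_cdf x - 1"
proof -
  have "frontier {-x..x} = {-x, x}"
    using x by (auto simp: frontier_def)
  then have "(\<lambda>n. measure (\<mu> n) {-x..x}) \<longlonglongrightarrow> measure std_normal_distribution {-x..x}"
    by (intro weak_conv_imp_continuity_set_conv[OF \<mu> real_dist_normal_dist conv])
      (auto simp: emeasure_std_normal_finite)
  then show ?thesis
    using x by (simp add: measure_std_normal_symmetric_interval)
qed

lemma std_normal_quantile_pos:
  assumes "std_normal_cdf q = 1 - \<alpha> / 2" "0 < \<alpha>" "\<alpha> < 1"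
  shows "0 < q"
proof (rule ccontr)
  interpret real_distribution std_normal_distribution
    by (rule real_dist_normal_dist)
  assume "\<not> 0 < q"
  then have "std_normal_cdf q \<le> std_normal_cdf 0"
    by (simp add: std_normal_cdf_eq_cdf cdf_nondecreasing)
  moreover have "std_normal_cdf 0 = 1 / 2"
    using std_normal_cdf_minus[of 0] by simp
  ultimately show False
    using assms by simp
qed

section \<open>Limits of probabilities\<close>

lemma tendsto_of_bracketing:
  fixes F b :: "real \<Rightarrow> nat \<Rightarrow> real" and G :: "real \<Rightarrow> real" and p :: "nat \<Rightarrow> real"
  assumes G: "isCont G x" and d: "0 < d"
    and F: "\<And>y. \<bar>y - x\<bar> \<le> d \<Longrightarrow> F y \<longlonglongrightarrow> G y"
    and b: "\<And>r. 0 < r \<Longrightarrow> r \<le> d \<Longrightarrow> b r \<longlonglongrightarrow> 0"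
    and bracket: "\<And>r. 0 < r \<Longrightarrow> r \<le> d \<Longrightarrow>
      \<forall>\<^sub>F m in sequentially. F (x - r) m - b r m \<le> p m \<and> p m \<le> F (x + r) m + b r m"
  shows "p \<longlonglongrightarrow> G x"
proof (rule tendstoI)
  fix \<epsilon> :: real
  assume \<epsilon>: "0 < \<epsilon>"
  obtain s where s: "0 < s" and near: "\<And>y. y \<noteq> x \<Longrightarrow> \<bar>y - x\<bar> < s \<Longrightarrow> \<bar>G y - G x\<bar> < \<epsilon> / 3"
    using LIM_D[OF G[unfolded isCont_def], of "\<epsilon> / 3"] \<epsilon> by auto
  define r where "r = min d (s / 2)"
  have r: "0 < r" "r \<le> d"
    using d s by (auto simp: r_def)
  have G_lo: "\<bar>G (x - r) - G x\<bar> < \<epsilon> / 3" and G_hi: "\<bar>G (x + r) - G x\<bar> < \<epsilon> / 3"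
    using near[of "x - r"] near[of "x + r"] r s by (auto simp: r_def)
  have "\<forall>\<^sub>F m in sequentially. dist (F (x - r) m) (G (x - r)) < \<epsilon> / 3"
    by (rule tendstoD[OF F]) (use r \<epsilon> in auto)
  moreover have "\<forall>\<^sub>F m in sequentially. dist (F (x + r) m) (G (x + r)) < \<epsilon> / 3"
    by (rule tendstoD[OF F]) (use r \<epsilon> in auto)
  moreover have "\<forall>\<^sub>F m in sequentially. dist (b r m) 0 < \<epsilon> / 3"
    by (rule tendstoD[OF b[OF r]]) (use \<epsilon> in auto)
  ultimately show "\<forall>\<^sub>F m in sequentially. dist (p m) (G x) < \<epsilon>"
    using bracket[OF r]
  proof eventually_elim
    case (elim m)
    then show ?case
      using G_lo G_hi unfolding dist_real_def abs_less_iff by linarith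
  qed
qed

lemma measure_Un_tendsto_0:
  assumes "\<And>m. A m \<in> sets (M m)" "\<And>m. B m \<in> sets (M m)"
    and "(\<lambda>m. measure (M m) (A m)) \<longlonglongrightarrow> 0" "(\<lambda>m. measure (M m) (B m)) \<longlonglongrightarrow> 0"
  shows "(\<lambda>m. measure (M m) (A m \<union> B m)) \<longlonglongrightarrow> 0"
proof (rule Lim_null_comparison)
  show "\<forall>\<^sub>F m in sequentially. norm (measure (M m) (A m \<union> B m))
      \<le> measure (M m) (A m) + measure (M m) (B m)"
    using assms(1,2) by (simp add: measure_Un_le)
  show "(\<lambda>m. measure (M m) (A m) + measure (M m) (B m)) \<longlonglongrightarrow> 0"
    using tendsto_add[OF assms(3,4)] by simp
qed

lemma measure_tendsto_0_subset:
  assumes M: "\<And>m. prob_space (M m)" and sub: "\<forall>\<^sub>F m in sequentially. A m \<subseteq> B m"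
    and B: "\<And>m. B m \<in> sets (M m)" and lim: "(\<lambda>m. measure (M m) (B m)) \<longlonglongrightarrow> 0"
  shows "(\<lambda>m. measure (M m) (A m)) \<longlonglongrightarrow> 0"
proof (rule Lim_null_comparison[OF _ lim])
  show "\<forall>\<^sub>F m in sequentially. norm (measure (M m) (A m)) \<le> measure (M m) (B m)"
    using sub by eventually_elim
      (simp add: finite_measure.finite_measure_mono[OF prob_space.finite_measure[OF M] _ B])
qed

lemma prob_abs_ge_tendsto_0:
  fixes X :: "nat \<Rightarrow> 'a \<Rightarrow> real" and t :: "nat \<Rightarrow> real"
  assumes M: "\<And>m. prob_space (M m)" and X: "\<And>m. X m \<in> borel_measurable (M m)"
    and sq: "\<And>m. integrable (M m) (\<lambda>\<omega>. (X m \<omega>)\<^sup>2)"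
    and t: "\<forall>\<^sub>F m in sequentially. 0 < t m"
    and lim: "(\<lambda>m. (LINT \<omega>|M m. (X m \<omega>)\<^sup>2) / (t m)\<^sup>2) \<longlonglongrightarrow> 0"
  shows "(\<lambda>m. measure (M m) {\<omega> \<in> space (M m). t m \<le> \<bar>X m \<omega>\<bar>}) \<longlonglongrightarrow> 0"
proof (rule Lim_null_comparison[OF _ lim])
  show "\<forall>\<^sub>F m in sequentially. norm (measure (M m) {\<omega> \<in> space (M m). t m \<le> \<bar>X m \<omega>\<bar>})
      \<le> (LINT \<omega>|M m. (X m \<omega>)\<^sup>2) / (t m)\<^sup>2"
    using t by eventually_elim
      (simp add: finite_measure.second_moment_method[OF prob_space.finite_measure[OF M] X sq])
qed

lemma abs_mult_sub_one_le:
  fixes x y \<delta> :: real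
  assumes "\<bar>x - 1\<bar> \<le> \<delta> / 3" "\<bar>y - 1\<bar> \<le> \<delta> / 3" "\<delta> \<le> 1"
  shows "\<bar>x * y - 1\<bar> \<le> \<delta>"
proof -
  have y: "\<bar>y\<bar> \<le> 4 / 3" and \<delta>: "0 \<le> \<delta>"
    using assms unfolding abs_le_iff by linarith+
  have "\<bar>(x - 1) * y\<bar> \<le> \<delta> / 3 * (4 / 3)"
    unfolding abs_mult by (rule mult_mono) (use assms y \<delta> abs_ge_zero in linarith)+
  moreover have "x * y - 1 = (x - 1) * y + (y - 1)"
    by (simp add: algebra_simps)
  ultimately show ?thesis
    using assms by linarith
qed

lemma abs_sub_ratio_le_iff:
  fixes \<beta> den n q k h1 h2 :: real
  assumes "den \<noteq> 0" "0 < k"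
  shows "\<bar>\<beta> - (\<beta> * den + n) / den\<bar> \<le> \<bar>q * inverse (den / k) * h1 * h2\<bar>
    \<longleftrightarrow> \<bar>n\<bar> \<le> \<bar>q\<bar> * k * \<bar>h1 * h2\<bar>"
proof -
  have "\<beta> - (\<beta> * den + n) / den = - (n / den)"
    using assms by (simp add: field_simps)
  moreover have "\<bar>q * inverse (den / k) * h1 * h2\<bar> = \<bar>q\<bar> * k * \<bar>h1 * h2\<bar> / \<bar>den\<bar>"
    using assms by (simp add: abs_mult field_simps)
  ultimately show ?thesis
    using assms by (simp add: divide_le_cancel)
qed

lemma abs_perturbed_le_bracket:
  fixes a b s R q \<delta> :: real
  assumes s: "0 < s" and a: "\<bar>a\<bar> < \<delta> * s" and R: "\<bar>R - 1\<bar> \<le> \<delta>" and q: "0 < q"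
  shows "\<bar>a + b\<bar> \<le> q * s * \<bar>R\<bar> \<Longrightarrow> \<bar>b / s\<bar> \<le> q + \<delta> * (q + 1)"
    and "\<bar>b / s\<bar> \<le> q - \<delta> * (q + 1) \<Longrightarrow> \<bar>a + b\<bar> \<le> q * s * \<bar>R\<bar>"
proof -
  have a': "\<bar>a / s\<bar> < \<delta>"
    using a s by (simp add: pos_divide_less_eq)
  have sum: "\<bar>a + b\<bar> \<le> q * s * \<bar>R\<bar> \<longleftrightarrow> \<bar>a / s + b / s\<bar> \<le> q * \<bar>R\<bar>"
    using s by (simp add: add_divide_distrib[symmetric] pos_divide_le_eq mult_ac)
  have "q * \<bar>R\<bar> \<le> q * (1 + \<delta>)" "q * (1 - \<delta>) \<le> q * \<bar>R\<bar>"
    using R q by (intro mult_left_mono; linarith)+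
  then show "\<bar>a + b\<bar> \<le> q * s * \<bar>R\<bar> \<Longrightarrow> \<bar>b / s\<bar> \<le> q + \<delta> * (q + 1)"
    and "\<bar>b / s\<bar> \<le> q - \<delta> * (q + 1) \<Longrightarrow> \<bar>a + b\<bar> \<le> q * s * \<bar>R\<bar>"
    unfolding sum using a' abs_triangle_ineq[of "a / s" "b / s"]
      abs_triangle_ineq[of "a / s + b / s" "- (a / s)"] by (auto simp: algebra_simps)
qed

lemma abs_ratio_sub_le:
  fixes P c d a b \<beta> e :: real
  assumes P: "0 < P" and c: "\<bar>c\<bar> < P / 4" and d: "\<bar>d\<bar> < P / 4"
    and a: "\<bar>a\<bar> < e * P / 4" and b: "\<bar>b\<bar> < e * P / 4"
  shows "\<bar>(\<beta> * (P + c + d) + (a + b)) / (P + c + d) - \<beta>\<bar> \<le> e"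
proof -
  have den: "P / 2 < P + c + d"
    using c d by linarith
  then have "\<bar>(\<beta> * (P + c + d) + (a + b)) / (P + c + d) - \<beta>\<bar> = \<bar>a + b\<bar> / (P + c + d)"
    using P by (simp add: field_simps)
  also have "\<dots> \<le> (e * P / 2) / (P / 2)"
    using a b den P abs_triangle_ineq[of a b] by (intro frac_le) auto
  also have "\<dots> = e"
    using P by simp
  finally show ?thesis .
qed

section \<open>The two-fold jackknife model\<close>

lemma borel_measurable_fst_snd_real [measurable]:
  "(fst :: real \<times> real \<Rightarrow> real) \<in> borel_measurable borel"
  "(snd :: real \<times> real \<Rightarrow> real) \<in> borel_measurable borel"
  unfolding borel_prod[symmetric] by simp_all

locale jive_model =
  fixes M :: "nat \<Rightarrow> 'w measure" and K :: "nat \<Rightarrow> nat" and fs :: "nat \<Rightarrow> nat \<Rightarrow> real"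
    and eta eps :: "nat \<Rightarrow> nat \<Rightarrow> nat \<Rightarrow> 'w \<Rightarrow> real"
  assumes prob: "\<And>m. prob_space (M m)"
    and K_pos: "\<And>m. K m \<ge> 1"
    and meas_eta: "\<And>m a v. a \<in> {1..K m} \<Longrightarrow> v \<in> {0,1} \<Longrightarrow> eta m a v \<in> borel_measurable (M m)"
    and meas_eps: "\<And>m a v. a \<in> {1..K m} \<Longrightarrow> v \<in> {0,1} \<Longrightarrow> eps m a v \<in> borel_measurable (M m)"
    and indep: "\<And>m. prob_space.indep_vars (M m) (\<lambda>_. borel)
                   (\<lambda>(a,v) \<omega>. (eta m a v \<omega>, eps m a v \<omega>)) ({1..K m} \<times> {0,1})"
    and ident: "\<And>m a v. a \<in> {1..K m} \<Longrightarrow> v \<in> {0,1} \<Longrightarrow>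
                   distr (M m) borel (\<lambda>\<omega>. (eta m a v \<omega>, eps m a v \<omega>))
                 = distr (M m) borel (\<lambda>\<omega>. (eta m 1 0 \<omega>, eps m 1 0 \<omega>))"
    and int_eta: "\<And>m a v. a \<in> {1..K m} \<Longrightarrow> v \<in> {0,1} \<Longrightarrow> integrable (M m) (eta m a v)"
    and int_eps: "\<And>m a v. a \<in> {1..K m} \<Longrightarrow> v \<in> {0,1} \<Longrightarrow> integrable (M m) (eps m a v)"
    and mean_eta: "\<And>m a v. a \<in> {1..K m} \<Longrightarrow> v \<in> {0,1} \<Longrightarrow> (LINT \<omega>|M m. eta m a v \<omega>) = 0"
    and mean_eps: "\<And>m a v. a \<in> {1..K m} \<Longrightarrow> v \<in> {0,1} \<Longrightarrow> (LINT \<omega>|M m. eps m a v \<omega>) = 0"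
    and sq_eta: "\<And>m a v. a \<in> {1..K m} \<Longrightarrow> v \<in> {0,1} \<Longrightarrow> integrable (M m) (\<lambda>\<omega>. (eta m a v \<omega>)\<^sup>2)"
    and sq_eps: "\<And>m a v. a \<in> {1..K m} \<Longrightarrow> v \<in> {0,1} \<Longrightarrow> integrable (M m) (\<lambda>\<omega>. (eps m a v \<omega>)\<^sup>2)"
    and var_eta_pos: "\<And>m. (LINT \<omega>|M m. (eta m 1 0 \<omega>)\<^sup>2) > 0"
    and var_eps_pos: "\<And>m. (LINT \<omega>|M m. (eps m 1 0 \<omega>)\<^sup>2) > 0"
begin

definition signal :: "nat \<Rightarrow> real" where
  "signal m = (\<Sum>a = 1..K m. (fs m a)\<^sup>2)"

definition pi_eps :: "nat \<Rightarrow> 'w \<Rightarrow> real" where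
  "pi_eps m \<omega> = (\<Sum>a = 1..K m. fs m a * eps m a 1 \<omega>)"

definition eta_eps :: "nat \<Rightarrow> 'w \<Rightarrow> real" where
  "eta_eps m \<omega> = (\<Sum>a = 1..K m. eta m a 0 \<omega> * eps m a 1 \<omega>)"

definition pi_eta :: "nat \<Rightarrow> 'w \<Rightarrow> real" where
  "pi_eta m \<omega> = (\<Sum>a = 1..K m. fs m a * (eta m a 0 \<omega> + eta m a 1 \<omega>))"

definition eta_eta :: "nat \<Rightarrow> 'w \<Rightarrow> real" where
  "eta_eta m \<omega> = (\<Sum>a = 1..K m. eta m a 0 \<omega> * eta m a 1 \<omega>)"

definition eta_eps_std :: "nat \<Rightarrow> 'w \<Rightarrow> real" where
  "eta_eps_std m \<omega> = eta_eps m \<omega> / (sqrt (K m) * sig_eta M eta m * sig_eps M eps m)"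

lemma jive_den_eq: "jive_den K fs eta m \<omega> = signal m + pi_eta m \<omega> + eta_eta m \<omega>"
proof -
  have "jive_den K fs eta m \<omega> = (\<Sum>a = 1..K m. (fs m a)\<^sup>2
      + fs m a * (eta m a 0 \<omega> + eta m a 1 \<omega>) + eta m a 0 \<omega> * eta m a 1 \<omega>)"
    unfolding jive_den_def Sbar_def by (simp add: algebra_simps power2_eq_square)
  then show ?thesis
    by (simp add: sum.distrib signal_def pi_eta_def eta_eta_def)
qed

lemma beta_hat_eq:
  "beta_hat K \<beta> fs eta eps m \<omega>
    = (\<beta> * jive_den K fs eta m \<omega> + (pi_eps m \<omega> + eta_eps m \<omega>)) / jive_den K fs eta m \<omega>"
proof -
  have "(\<Sum>a = 1..K m. Sbar fs eta m a 0 \<omega> * Ybar \<beta> fs eta eps m a 1 \<omega>)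
      = (\<Sum>a = 1..K m. \<beta> * (Sbar fs eta m a 0 \<omega> * Sbar fs eta m a 1 \<omega>)
          + fs m a * eps m a 1 \<omega> + eta m a 0 \<omega> * eps m a 1 \<omega>)"
    unfolding Ybar_def by (simp add: Sbar_def algebra_simps)
  then show ?thesis
    by (simp add: beta_hat_def jive_den_def pi_eps_def eta_eps_def sum.distrib sum_distrib_left)
qed

lemma measurable_noise [measurable]:
  "pi_eps m \<in> borel_measurable (M m)" "eta_eps m \<in> borel_measurable (M m)"
  "pi_eta m \<in> borel_measurable (M m)" "eta_eta m \<in> borel_measurable (M m)"
  unfolding pi_eps_def[abs_def] eta_eps_def[abs_def] pi_eta_def[abs_def] eta_eta_def[abs_def]
  using meas_eta meas_eps by (auto intro!: borel_measurable_sum)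

lemma measurable_eta_eps_std [measurable]: "eta_eps_std m \<in> borel_measurable (M m)"
  unfolding eta_eps_std_def[abs_def] by measurable

lemma measurable_jive_den [measurable]: "jive_den K fs eta m \<in> borel_measurable (M m)"
  unfolding jive_den_eq[abs_def] by measurable

lemma measurable_beta_hat [measurable]: "beta_hat K \<beta> fs eta eps m \<in> borel_measurable (M m)"
  unfolding beta_hat_eq[abs_def] by measurable

lemma sig_eta_pos: "0 < sig_eta M eta m"
  using var_eta_pos[of m] by (simp add: sig_eta_def)

lemma sig_eps_pos: "0 < sig_eps M eps m"
  using var_eps_pos[of m] by (simp add: sig_eps_def)

lemma one_in_cells: "1 \<in> {1..K m}"
  using K_pos[of m] by simp

lemma measurable_cell:
  "a \<in> {1..K m} \<Longrightarrow> v \<in> {0,1} \<Longrightarrow> (\<lambda>\<omega>. (eta m a v \<omega>, eps m a v \<omega>)) \<in> borel_measurable (M m)"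
  using meas_eta meas_eps by (auto intro!: borel_measurable_Pair)

lemma integral_cell_eq:
  fixes f :: "real \<times> real \<Rightarrow> real"
  assumes a: "a \<in> {1..K m}" "v \<in> {0,1}" and f: "f \<in> borel_measurable borel"
  shows "(LINT \<omega>|M m. f (eta m a v \<omega>, eps m a v \<omega>)) = (LINT \<omega>|M m. f (eta m 1 0 \<omega>, eps m 1 0 \<omega>))"
  using integral_distr[OF measurable_cell[OF a] f]
    integral_distr[OF measurable_cell[OF one_in_cells] f]
    ident[OF a] by simp

lemma distr_cell_eq:
  assumes a: "a \<in> {1..K m}" "v \<in> {0,1}" and f: "f \<in> borel \<rightarrow>\<^sub>M N"
  shows "distr (M m) N (\<lambda>\<omega>. f (eta m a v \<omega>, eps m a v \<omega>))
    = distr (M m) N (\<lambda>\<omega>. f (eta m 1 0 \<omega>, eps m 1 0 \<omega>))"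
  using distr_distr[OF f measurable_cell[OF a]] distr_distr[OF f measurable_cell[OF one_in_cells]]
    ident[OF a]
  by (simp add: comp_def)

lemma second_moment_eta:
  assumes "a \<in> {1..K m}" "v \<in> {0,1}"
  shows "(LINT \<omega>|M m. (eta m a v \<omega>)\<^sup>2) = (sig_eta M eta m)\<^sup>2"
proof -
  have "(\<lambda>x::real \<times> real. (fst x)\<^sup>2) \<in> borel_measurable borel"
    by measurable
  from integral_cell_eq[OF assms this] show ?thesis
    using var_eta_pos[of m] by (simp add: sig_eta_def)
qed

lemma second_moment_eps:
  assumes "a \<in> {1..K m}" "v \<in> {0,1}"
  shows "(LINT \<omega>|M m. (eps m a v \<omega>)\<^sup>2) = (sig_eps M eps m)\<^sup>2"
proof -
  have "(\<lambda>x::real \<times> real. (snd x)\<^sup>2) \<in> borel_measurable borel"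
    by measurable
  from integral_cell_eq[OF assms this] show ?thesis
    using var_eps_pos[of m] by (simp add: sig_eps_def)
qed

lemma indep_cells:
  fixes H :: "nat \<Rightarrow> real \<times> real \<Rightarrow> real \<times> real \<Rightarrow> real"
  assumes "\<And>a. (\<lambda>(x, y). H a x y) \<in> borel_measurable (borel \<Otimes>\<^sub>M borel)"
  shows "prob_space.indep_vars (M m) (\<lambda>_. borel)
    (\<lambda>a \<omega>. H a (eta m a 0 \<omega>, eps m a 0 \<omega>) (eta m a 1 \<omega>, eps m a 1 \<omega>)) {1..K m}"
  using prob_space.indep_vars_cells[OF prob indep, where H = H] assms by simp

lemma fold_product_moment:
  fixes f g :: "real \<times> real \<Rightarrow> real"
  assumes a: "a \<in> {1..K m}" and f: "f \<in> borel_measurable borel" and g: "g \<in> borel_measurable borel"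
    and fi: "integrable (M m) (\<lambda>\<omega>. f (eta m a 0 \<omega>, eps m a 0 \<omega>))"
    and gi: "integrable (M m) (\<lambda>\<omega>. g (eta m a 1 \<omega>, eps m a 1 \<omega>))"
  shows "integrable (M m) (\<lambda>\<omega>. f (eta m a 0 \<omega>, eps m a 0 \<omega>) * g (eta m a 1 \<omega>, eps m a 1 \<omega>))"
    and "(LINT \<omega>|M m. f (eta m a 0 \<omega>, eps m a 0 \<omega>) * g (eta m a 1 \<omega>, eps m a 1 \<omega>))
      = (LINT \<omega>|M m. f (eta m a 0 \<omega>, eps m a 0 \<omega>)) * (LINT \<omega>|M m. g (eta m a 1 \<omega>, eps m a 1 \<omega>))"
proof -
  interpret prob_space "M m"
    by (rule prob)
  have "indep_var borel (\<lambda>\<omega>. f (eta m a 0 \<omega>, eps m a 0 \<omega>)) borel (\<lambda>\<omega>. g (eta m a 1 \<omega>, eps m a 1 \<omega>))"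
    using indep_var_folds[OF indep a f g] by simp
  from indep_var_integrable[OF this fi gi] indep_var_lebesgue_integral[OF this fi gi]
  show "integrable (M m) (\<lambda>\<omega>. f (eta m a 0 \<omega>, eps m a 0 \<omega>) * g (eta m a 1 \<omega>, eps m a 1 \<omega>))"
    and "(LINT \<omega>|M m. f (eta m a 0 \<omega>, eps m a 0 \<omega>) * g (eta m a 1 \<omega>, eps m a 1 \<omega>))
      = (LINT \<omega>|M m. f (eta m a 0 \<omega>, eps m a 0 \<omega>)) * (LINT \<omega>|M m. g (eta m a 1 \<omega>, eps m a 1 \<omega>))"
    by simp_all
qed

lemma second_moment_pi_eps:
  "integrable (M m) (\<lambda>\<omega>. (pi_eps m \<omega>)\<^sup>2)"
  "(LINT \<omega>|M m. (pi_eps m \<omega>)\<^sup>2) = signal m * (sig_eps M eps m)\<^sup>2"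
proof -
  interpret prob_space "M m"
    by (rule prob)
  have indep_terms: "indep_vars (\<lambda>_. borel) (\<lambda>a \<omega>. fs m a * eps m a 1 \<omega>) {1..K m}"
    using indep_cells[where H = "\<lambda>a x y. fs m a * snd y"] by simp
  have term_moments: "integrable (M m) (\<lambda>\<omega>. fs m a * eps m a 1 \<omega>)"
    "expectation (\<lambda>\<omega>. fs m a * eps m a 1 \<omega>) = 0"
    "integrable (M m) (\<lambda>\<omega>. (fs m a * eps m a 1 \<omega>)\<^sup>2)"
    "expectation (\<lambda>\<omega>. (fs m a * eps m a 1 \<omega>)\<^sup>2) = (fs m a)\<^sup>2 * (sig_eps M eps m)\<^sup>2"
    if a: "a \<in> {1..K m}" for a
    using int_eps[OF a] mean_eps[OF a] sq_eps[OF a] second_moment_eps[OF a]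
    by (simp_all add: power_mult_distrib)
  note sum_moments = second_moment_sum_indep[OF _ indep_terms term_moments(1-3)]
  show "integrable (M m) (\<lambda>\<omega>. (pi_eps m \<omega>)\<^sup>2)"
    using sum_moments(1) by (simp add: pi_eps_def[abs_def])
  have "(LINT \<omega>|M m. (pi_eps m \<omega>)\<^sup>2) = (\<Sum>a = 1..K m. (fs m a)\<^sup>2 * (sig_eps M eps m)\<^sup>2)"
    using sum_moments(2) term_moments(4) by (simp add: pi_eps_def[abs_def])
  then show "(LINT \<omega>|M m. (pi_eps m \<omega>)\<^sup>2) = signal m * (sig_eps M eps m)\<^sup>2"
    by (simp add: signal_def sum_distrib_right)
qed

lemma moments_eta_times_eps:
  assumes a: "a \<in> {1..K m}"
  shows "integrable (M m) (\<lambda>\<omega>. eta m a 0 \<omega> * eps m a 1 \<omega>)"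
    "(LINT \<omega>|M m. eta m a 0 \<omega> * eps m a 1 \<omega>) = 0"
    "integrable (M m) (\<lambda>\<omega>. (eta m a 0 \<omega> * eps m a 1 \<omega>)\<^sup>2)"
    "(LINT \<omega>|M m. (eta m a 0 \<omega> * eps m a 1 \<omega>)\<^sup>2) = (sig_eta M eta m)\<^sup>2 * (sig_eps M eps m)\<^sup>2"
  using fold_product_moment[OF a, of fst snd]
    fold_product_moment[OF a, of "\<lambda>x. (fst x)\<^sup>2" "\<lambda>x. (snd x)\<^sup>2"]
    int_eta[OF a] int_eps[OF a] mean_eta[OF a] mean_eps[OF a] sq_eta[OF a] sq_eps[OF a]
    second_moment_eta[OF a] second_moment_eps[OF a]
  by (simp_all add: power_mult_distrib)

lemma second_moment_eta_eps:
  "integrable (M m) (\<lambda>\<omega>. (eta_eps m \<omega>)\<^sup>2)"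
  "(LINT \<omega>|M m. (eta_eps m \<omega>)\<^sup>2) = K m * ((sig_eta M eta m)\<^sup>2 * (sig_eps M eps m)\<^sup>2)"
proof -
  interpret prob_space "M m"
    by (rule prob)
  have indep_terms: "indep_vars (\<lambda>_. borel) (\<lambda>a \<omega>. eta m a 0 \<omega> * eps m a 1 \<omega>) {1..K m}"
    using indep_cells[where H = "\<lambda>a x y. fst x * snd y"] by simp
  show "integrable (M m) (\<lambda>\<omega>. (eta_eps m \<omega>)\<^sup>2)"
    "(LINT \<omega>|M m. (eta_eps m \<omega>)\<^sup>2) = K m * ((sig_eta M eta m)\<^sup>2 * (sig_eps M eps m)\<^sup>2)"
    using second_moment_sum_indep[OF _ indep_terms] moments_eta_times_eps
    by (simp_all add: eta_eps_def[abs_def])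
qed

lemma second_moment_pi_eta:
  "integrable (M m) (\<lambda>\<omega>. (pi_eta m \<omega>)\<^sup>2)"
  "(LINT \<omega>|M m. (pi_eta m \<omega>)\<^sup>2) = signal m * (2 * (sig_eta M eta m)\<^sup>2)"
proof -
  interpret prob_space "M m"
    by (rule prob)
  have indep_terms: "indep_vars (\<lambda>_. borel) (\<lambda>a \<omega>. fs m a * (eta m a 0 \<omega> + eta m a 1 \<omega>)) {1..K m}"
    using indep_cells[where H = "\<lambda>a x y. fs m a * (fst x + fst y)"] by simp
  have term_moments: "integrable (M m) (\<lambda>\<omega>. fs m a * (eta m a 0 \<omega> + eta m a 1 \<omega>))"
    "expectation (\<lambda>\<omega>. fs m a * (eta m a 0 \<omega> + eta m a 1 \<omega>)) = 0"
    "integrable (M m) (\<lambda>\<omega>. (fs m a * (eta m a 0 \<omega> + eta m a 1 \<omega>))\<^sup>2)"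
    "expectation (\<lambda>\<omega>. (fs m a * (eta m a 0 \<omega> + eta m a 1 \<omega>))\<^sup>2)
      = (fs m a)\<^sup>2 * (2 * (sig_eta M eta m)\<^sup>2)"
    if a: "a \<in> {1..K m}" for a
  proof -
    have square: "(\<lambda>\<omega>. (fs m a * (eta m a 0 \<omega> + eta m a 1 \<omega>))\<^sup>2) = (\<lambda>\<omega>. (fs m a)\<^sup>2 *
        ((eta m a 0 \<omega>)\<^sup>2 + 2 * (eta m a 0 \<omega> * eta m a 1 \<omega>) + (eta m a 1 \<omega>)\<^sup>2))"
      by (simp add: power2_eq_square algebra_simps)
    show "integrable (M m) (\<lambda>\<omega>. fs m a * (eta m a 0 \<omega> + eta m a 1 \<omega>))"
      "expectation (\<lambda>\<omega>. fs m a * (eta m a 0 \<omega> + eta m a 1 \<omega>)) = 0"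
      using int_eta[OF a] mean_eta[OF a] by simp_all
    show "integrable (M m) (\<lambda>\<omega>. (fs m a * (eta m a 0 \<omega> + eta m a 1 \<omega>))\<^sup>2)"
      "expectation (\<lambda>\<omega>. (fs m a * (eta m a 0 \<omega> + eta m a 1 \<omega>))\<^sup>2)
        = (fs m a)\<^sup>2 * (2 * (sig_eta M eta m)\<^sup>2)"
      unfolding square using fold_product_moment[OF a, of fst fst] int_eta[OF a] mean_eta[OF a]
        sq_eta[OF a] second_moment_eta[OF a]
      by simp_all
  qed
  show "integrable (M m) (\<lambda>\<omega>. (pi_eta m \<omega>)\<^sup>2)"
    "(LINT \<omega>|M m. (pi_eta m \<omega>)\<^sup>2) = signal m * (2 * (sig_eta M eta m)\<^sup>2)"
    using second_moment_sum_indep[OF _ indep_terms] term_moments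
    by (simp_all add: pi_eta_def[abs_def] signal_def sum_distrib_right)
qed

lemma second_moment_eta_eta:
  "integrable (M m) (\<lambda>\<omega>. (eta_eta m \<omega>)\<^sup>2)"
  "(LINT \<omega>|M m. (eta_eta m \<omega>)\<^sup>2) = K m * ((sig_eta M eta m)\<^sup>2 * (sig_eta M eta m)\<^sup>2)"
proof -
  interpret prob_space "M m"
    by (rule prob)
  have indep_terms: "indep_vars (\<lambda>_. borel) (\<lambda>a \<omega>. eta m a 0 \<omega> * eta m a 1 \<omega>) {1..K m}"
    using indep_cells[where H = "\<lambda>a x y. fst x * fst y"] by simp
  have term_moments: "integrable (M m) (\<lambda>\<omega>. eta m a 0 \<omega> * eta m a 1 \<omega>)"
    "expectation (\<lambda>\<omega>. eta m a 0 \<omega> * eta m a 1 \<omega>) = 0"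
    "integrable (M m) (\<lambda>\<omega>. (eta m a 0 \<omega> * eta m a 1 \<omega>)\<^sup>2)"
    "expectation (\<lambda>\<omega>. (eta m a 0 \<omega> * eta m a 1 \<omega>)\<^sup>2) = (sig_eta M eta m)\<^sup>2 * (sig_eta M eta m)\<^sup>2"
    if a: "a \<in> {1..K m}" for a
    using fold_product_moment[OF a, of fst fst]
      fold_product_moment[OF a, of "\<lambda>x. (fst x)\<^sup>2" "\<lambda>x. (fst x)\<^sup>2"]
      int_eta[OF a] mean_eta[OF a] sq_eta[OF a] second_moment_eta[OF a]
    by (simp_all add: power_mult_distrib)
  show "integrable (M m) (\<lambda>\<omega>. (eta_eta m \<omega>)\<^sup>2)"
    "(LINT \<omega>|M m. (eta_eta m \<omega>)\<^sup>2) = K m * ((sig_eta M eta m)\<^sup>2 * (sig_eta M eta m)\<^sup>2)"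
    using second_moment_sum_indep[OF _ indep_terms] term_moments
    by (simp_all add: eta_eta_def[abs_def])
qed

definition eta_eps_unit :: "nat \<Rightarrow> nat \<Rightarrow> 'w \<Rightarrow> real" where
  "eta_eps_unit m a \<omega> = eta m a 0 \<omega> * eps m a 1 \<omega> / (sig_eta M eta m * sig_eps M eps m)"

lemma indep_eta_eps_unit: "prob_space.indep_vars (M m) (\<lambda>_. borel) (eta_eps_unit m) {1..K m}"
  using indep_cells[where H = "\<lambda>a x y. fst x * snd y / (sig_eta M eta m * sig_eps M eps m)"]
  by (simp add: eta_eps_unit_def[abs_def])

text \<open>
  The hypothesis \<open>ident\<close> only identifies the laws of the within-fold pairs; the cross-fold pair
  \<open>(\<eta>\<^sub>a\<^sub>0, \<epsilon>\<^sub>a\<^sub>1)\<close> has the product of their marginals as its law because the folds are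
  independent.
\<close>

lemma distr_eta_eps_unit:
  assumes a: "a \<in> {1..K m}"
  shows "distr (M m) borel (eta_eps_unit m a) = distr (M m) borel (eta_eps_unit m 1)"
proof -
  interpret prob_space "M m"
    by (rule prob)
  have pair_law: "distr (M m) (borel \<Otimes>\<^sub>M borel) (\<lambda>\<omega>. (eta m a 0 \<omega>, eps m a 1 \<omega>))
      = distr (M m) (borel \<Otimes>\<^sub>M borel) (\<lambda>\<omega>. (eta m 1 0 \<omega>, eps m 1 1 \<omega>))"
  proof (rule distr_pair_eq_if_indep_var)
    show "indep_var borel (eta m a 0) borel (eps m a 1)"
      "indep_var borel (eta m 1 0) borel (eps m 1 1)"
      using indep_var_folds[OF indep a, of fst snd]
        indep_var_folds[OF indep one_in_cells, of fst snd]
      by simp_all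
    show "distr (M m) borel (eta m a 0) = distr (M m) borel (eta m 1 0)"
      using distr_cell_eq[OF a, of 0 fst] distr_cell_eq[OF one_in_cells, of 0 fst] by simp
    show "distr (M m) borel (eps m a 1) = distr (M m) borel (eps m 1 1)"
      using distr_cell_eq[OF a, of 1 snd] distr_cell_eq[OF one_in_cells, of 1 snd] by simp
  qed
  define h where "h x = fst x * snd x / (sig_eta M eta m * sig_eps M eps m)" for x :: "real \<times> real"
  have h: "h \<in> borel_measurable (borel \<Otimes>\<^sub>M borel)"
    unfolding h_def by measurable
  have "(\<lambda>\<omega>. (eta m b 0 \<omega>, eps m b 1 \<omega>)) \<in> M m \<rightarrow>\<^sub>M borel \<Otimes>\<^sub>M borel" if "b \<in> {1..K m}" for b
    using meas_eta[OF that] meas_eps[OF that] by simp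
  from distr_distr[OF h this[OF a]] distr_distr[OF h this[OF one_in_cells]] pair_law show ?thesis
    by (simp add: comp_def h_def eta_eps_unit_def[abs_def])
qed

lemma moments_eta_eps_unit:
  "integrable (M m) (eta_eps_unit m 1)" "(LINT \<omega>|M m. eta_eps_unit m 1 \<omega>) = 0"
  "integrable (M m) (\<lambda>\<omega>. (eta_eps_unit m 1 \<omega>)\<^sup>2)" "(LINT \<omega>|M m. (eta_eps_unit m 1 \<omega>)\<^sup>2) = 1"
  using moments_eta_times_eps[OF one_in_cells] sig_eta_pos[of m] sig_eps_pos[of m]
  by (simp_all add: eta_eps_unit_def[abs_def] power_divide power_mult_distrib)

lemma sum_eta_eps_unit:
  "(\<Sum>a\<in>{1..K m}. eta_eps_unit m a \<omega>) / sqrt (card {1..K m})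
    = eta_eps_std m \<omega>"
  by (simp add: eta_eps_unit_def eta_eps_std_def eta_eps_def sum_divide_distrib mult_ac)

lemma sets_in_CI:
  assumes [measurable]: "sh_eta m \<in> borel_measurable (M m)" "sh_eps m \<in> borel_measurable (M m)"
  shows "{\<omega> \<in> space (M m). in_CI K \<beta> fs eta eps sh_eta sh_eps q m \<omega>} \<in> sets (M m)"
  unfolding in_CI_def by measurable

lemma in_CI_bracket:
  fixes \<delta> q :: real
  assumes pos: "0 < signal m"
    and C: "\<bar>pi_eta m \<omega>\<bar> < signal m / 4" and D: "\<bar>eta_eta m \<omega>\<bar> < signal m / 4"
    and A: "\<bar>pi_eps m \<omega>\<bar> < \<delta> * (sqrt (K m) * sig_eta M eta m * sig_eps M eps m)"
    and h1: "\<bar>sh_eta m \<omega> / sig_eta M eta m - 1\<bar> \<le> \<delta> / 3"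
    and h2: "\<bar>sh_eps m \<omega> / sig_eps M eps m - 1\<bar> \<le> \<delta> / 3"
    and \<delta>: "\<delta> \<le> 1" and q: "0 < q"
  shows "in_CI K \<beta> fs eta eps sh_eta sh_eps q m \<omega> \<Longrightarrow> \<bar>eta_eps_std m \<omega>\<bar> \<le> q + \<delta> * (q + 1)"
    and "\<bar>eta_eps_std m \<omega>\<bar> \<le> q - \<delta> * (q + 1) \<Longrightarrow> in_CI K \<beta> fs eta eps sh_eta sh_eps q m \<omega>"
proof -
  define s where "s = sqrt (K m) * sig_eta M eta m * sig_eps M eps m"
  define R where "R = sh_eta m \<omega> / sig_eta M eta m * (sh_eps m \<omega> / sig_eps M eps m)"
  have \<sigma>: "0 < sig_eta M eta m" "0 < sig_eps M eps m" and K: "0 < sqrt (K m)"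
    using sig_eta_pos sig_eps_pos K_pos[of m] by simp_all
  have den: "jive_den K fs eta m \<omega> \<noteq> 0"
    using pos C D by (simp add: jive_den_eq)
  have "sqrt (K m) * \<bar>sh_eta m \<omega> * sh_eps m \<omega>\<bar> = s * \<bar>R\<bar>"
    using \<sigma> by (simp add: s_def R_def abs_mult)
  then have iff: "in_CI K \<beta> fs eta eps sh_eta sh_eps q m \<omega>
      \<longleftrightarrow> \<bar>pi_eps m \<omega> + eta_eps m \<omega>\<bar> \<le> q * s * \<bar>R\<bar>"
    unfolding in_CI_def beta_hat_eq abs_sub_ratio_le_iff[OF den K] using q by (simp add: mult.assoc)
  have "\<bar>R - 1\<bar> \<le> \<delta>"
    unfolding R_def by (rule abs_mult_sub_one_le[OF h1 h2 \<delta>])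
  note bracket = abs_perturbed_le_bracket[OF _ A[folded s_def] this q]
  show "in_CI K \<beta> fs eta eps sh_eta sh_eps q m \<omega> \<Longrightarrow> \<bar>eta_eps_std m \<omega>\<bar> \<le> q + \<delta> * (q + 1)"
    and "\<bar>eta_eps_std m \<omega>\<bar> \<le> q - \<delta> * (q + 1) \<Longrightarrow> in_CI K \<beta> fs eta eps sh_eta sh_eps q m \<omega>"
    using bracket \<sigma> K unfolding iff eta_eps_std_def s_def by simp_all
qed

definition ci_bad_event :: "(nat \<Rightarrow> 'w \<Rightarrow> real) \<Rightarrow> (nat \<Rightarrow> 'w \<Rightarrow> real) \<Rightarrow> real \<Rightarrow> nat \<Rightarrow> 'w set" where
  "ci_bad_event sh_eta sh_eps \<delta> m =
     {\<omega> \<in> space (M m). signal m / 4 \<le> \<bar>pi_eta m \<omega>\<bar>}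
   \<union> {\<omega> \<in> space (M m). signal m / 4 \<le> \<bar>eta_eta m \<omega>\<bar>}
   \<union> {\<omega> \<in> space (M m). \<delta> * (sqrt (K m) * sig_eta M eta m * sig_eps M eps m) \<le> \<bar>pi_eps m \<omega>\<bar>}
   \<union> {\<omega> \<in> space (M m). \<delta> / 3 < \<bar>sh_eta m \<omega> / sig_eta M eta m - 1\<bar>}
   \<union> {\<omega> \<in> space (M m). \<delta> / 3 < \<bar>sh_eps m \<omega> / sig_eps M eps m - 1\<bar>}"

lemma measure_in_CI_bracket:
  fixes \<beta> \<delta> q :: real
  assumes [measurable]: "sh_eta m \<in> borel_measurable (M m)" "sh_eps m \<in> borel_measurable (M m)"
    and pos: "0 < signal m" and \<delta>: "\<delta> \<le> 1" and q: "0 < q"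
  defines "CI \<equiv> {\<omega> \<in> space (M m). in_CI K \<beta> fs eta eps sh_eta sh_eps q m \<omega>}"
    and "bad \<equiv> ci_bad_event sh_eta sh_eps \<delta> m"
  shows "measure (M m) CI
      \<le> measure (M m) {\<omega> \<in> space (M m). \<bar>eta_eps_std m \<omega>\<bar> \<le> q + \<delta> * (q + 1)} + measure (M m) bad"
    and "measure (M m) {\<omega> \<in> space (M m). \<bar>eta_eps_std m \<omega>\<bar> \<le> q - \<delta> * (q + 1)}
      \<le> measure (M m) CI + measure (M m) bad"
proof -
  interpret prob_space "M m"
    by (rule prob)
  define U where "U = {\<omega> \<in> space (M m). \<bar>eta_eps_std m \<omega>\<bar> \<le> q + \<delta> * (q + 1)}"
  define L where "L = {\<omega> \<in> space (M m). \<bar>eta_eps_std m \<omega>\<bar> \<le> q - \<delta> * (q + 1)}"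
  have sets: "CI \<in> sets (M m)" "bad \<in> sets (M m)" "U \<in> sets (M m)" "L \<in> sets (M m)"
    unfolding CI_def by (rule sets_in_CI; measurable)
      (unfold bad_def ci_bad_event_def U_def L_def; measurable)+
  have good: "\<bar>pi_eta m \<omega>\<bar> < signal m / 4" "\<bar>eta_eta m \<omega>\<bar> < signal m / 4"
    "\<bar>pi_eps m \<omega>\<bar> < \<delta> * (sqrt (K m) * sig_eta M eta m * sig_eps M eps m)"
    "\<bar>sh_eta m \<omega> / sig_eta M eta m - 1\<bar> \<le> \<delta> / 3" "\<bar>sh_eps m \<omega> / sig_eps M eps m - 1\<bar> \<le> \<delta> / 3"
    if "\<omega> \<in> space (M m)" "\<omega> \<notin> bad" for \<omega>
    using that by (auto simp: bad_def ci_bad_event_def)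
  have bracket: "(in_CI K \<beta> fs eta eps sh_eta sh_eps q m \<omega> \<longrightarrow> \<bar>eta_eps_std m \<omega>\<bar> \<le> q + \<delta> * (q + 1))
      \<and> (\<bar>eta_eps_std m \<omega>\<bar> \<le> q - \<delta> * (q + 1) \<longrightarrow> in_CI K \<beta> fs eta eps sh_eta sh_eps q m \<omega>)"
    if "\<omega> \<in> space (M m)" "\<omega> \<notin> bad" for \<omega>
    using in_CI_bracket[where sh_eta = sh_eta and sh_eps = sh_eps and \<beta> = \<beta>,
        OF pos good[OF that] \<delta> q]
    by simp
  have "CI \<subseteq> U \<union> bad"
    using bracket by (auto simp: CI_def U_def)
  then have "measure (M m) CI \<le> measure (M m) (U \<union> bad)"
    using sets by (intro finite_measure_mono) auto
  also have "\<dots> \<le> measure (M m) U + measure (M m) bad"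
    using sets by (intro measure_Un_le)
  finally show "measure (M m) CI
      \<le> measure (M m) {\<omega> \<in> space (M m). \<bar>eta_eps_std m \<omega>\<bar> \<le> q + \<delta> * (q + 1)}
      + measure (M m) bad"
    by (simp add: U_def)
  have "L \<subseteq> CI \<union> bad"
    using bracket by (auto simp: CI_def L_def)
  then have "measure (M m) L \<le> measure (M m) (CI \<union> bad)"
    using sets by (intro finite_measure_mono) auto
  also have "\<dots> \<le> measure (M m) CI + measure (M m) bad"
    using sets by (intro measure_Un_le)
  finally show "measure (M m) {\<omega> \<in> space (M m). \<bar>eta_eps_std m \<omega>\<bar> \<le> q - \<delta> * (q + 1)}
      \<le> measure (M m) CI + measure (M m) bad"
    by (simp add: L_def)
qed

end

section \<open>Asymptotics\<close>

locale jive_asymptotics = jive_model M K fs eta eps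
  for M :: "nat \<Rightarrow> 'w measure" and K fs eta eps +
  fixes c :: real
  assumes K_tendsto: "filterlim K at_top sequentially"
    and signal_per_cell: "(\<lambda>m. (\<Sum>a = 1..K m. (fs m a)\<^sup>2) / (real (K m) * (sig_eta M eta m)\<^sup>2)) \<longlonglongrightarrow> 0"
    and noise_ratio: "(\<lambda>m. sig_eps M eps m / sig_eta M eta m) \<longlonglongrightarrow> c"
    and signal_strength:
      "filterlim (\<lambda>m. (\<Sum>a = 1..K m. (fs m a)\<^sup>2) / (sqrt (real (K m)) * (sig_eta M eta m)\<^sup>2))
               at_top sequentially"
    and lindeberg: "\<And>e. e > 0 \<Longrightarrow>
        (\<lambda>m. LINT \<omega>|M m.
            ((eta m 1 0 \<omega> * eps m 1 1 \<omega>) / (sig_eta M eta m * sig_eps M eps m))\<^sup>2 *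
            indicator {\<omega>. \<bar>(eta m 1 0 \<omega> * eps m 1 1 \<omega>) / (sig_eta M eta m * sig_eps M eps m)\<bar>
                          \<ge> e * sqrt (real (K m))} \<omega>) \<longlonglongrightarrow> 0"
begin

lemma eventually_signal_pos: "\<forall>\<^sub>F m in sequentially. 0 < signal m"
proof -
  have "\<forall>\<^sub>F m in sequentially. 1 \<le> signal m / (sqrt (K m) * (sig_eta M eta m)\<^sup>2)"
    using signal_strength by (simp add: filterlim_at_top signal_def)
  then show ?thesis
  proof eventually_elim
    case (elim m)
    have "0 < sqrt (K m) * (sig_eta M eta m)\<^sup>2"
      using K_pos[of m] sig_eta_pos[of m] by simp
    with elim show ?case
      by (auto simp: le_divide_eq split: if_splits)
  qed
qed

lemma noise_over_signal_tendsto_0: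
  "(\<lambda>m. (sig_eta M eta m)\<^sup>2 / signal m) \<longlonglongrightarrow> 0"
  "(\<lambda>m. K m * ((sig_eta M eta m)\<^sup>2 * (sig_eta M eta m)\<^sup>2) / (signal m)\<^sup>2) \<longlonglongrightarrow> 0"
  "(\<lambda>m. (sig_eps M eps m)\<^sup>2 / signal m) \<longlonglongrightarrow> 0"
  "(\<lambda>m. K m * ((sig_eta M eta m)\<^sup>2 * (sig_eps M eps m)\<^sup>2) / (signal m)\<^sup>2) \<longlonglongrightarrow> 0"
proof -
  define g where "g m = signal m / (sqrt (K m) * (sig_eta M eta m)\<^sup>2)" for m
  define \<rho> where "\<rho> m = sig_eps M eps m / sig_eta M eta m" for m
  have inv_g: "(\<lambda>m. inverse (g m)) \<longlonglongrightarrow> 0"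
    using tendsto_inverse_0_at_top[OF signal_strength] by (simp add: g_def signal_def)
  have inv_sqrt_K: "(\<lambda>m. inverse (sqrt (K m))) \<longlonglongrightarrow> 0"
    by (intro tendsto_inverse_0_at_top filterlim_compose[OF sqrt_at_top]
        filterlim_compose[OF filterlim_real_sequentially K_tendsto])
  have \<rho>: "\<rho> \<longlonglongrightarrow> c"
    using noise_ratio by (simp add: \<rho>_def[abs_def])
  have pos: "0 < sqrt (K m)" "0 < sig_eta M eta m" for m
    using K_pos[of m] sig_eta_pos[of m] by simp_all
  have eta1: "(sig_eta M eta m)\<^sup>2 / signal m = inverse (g m) * inverse (sqrt (K m))" for m
    using pos[of m] by (cases "signal m = 0") (simp_all add: g_def field_simps)
  have eta2: "K m * ((sig_eta M eta m)\<^sup>2 * (sig_eta M eta m)\<^sup>2) / (signal m)\<^sup>2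
      = (inverse (g m))\<^sup>2" for m
    using pos[of m] by (cases "signal m = 0") (simp_all add: g_def field_simps power2_eq_square)
  have eps1: "(sig_eps M eps m)\<^sup>2 / signal m = (\<rho> m)\<^sup>2 * ((sig_eta M eta m)\<^sup>2 / signal m)" for m
    using pos[of m] by (simp add: \<rho>_def power_divide)
  have eps2: "K m * ((sig_eta M eta m)\<^sup>2 * (sig_eps M eps m)\<^sup>2) / (signal m)\<^sup>2
      = (\<rho> m)\<^sup>2 * (K m * ((sig_eta M eta m)\<^sup>2 * (sig_eta M eta m)\<^sup>2) / (signal m)\<^sup>2)" for m
    using pos[of m] by (simp add: \<rho>_def field_simps power2_eq_square)
  show "(\<lambda>m. (sig_eta M eta m)\<^sup>2 / signal m) \<longlonglongrightarrow> 0"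
    and "(\<lambda>m. K m * ((sig_eta M eta m)\<^sup>2 * (sig_eta M eta m)\<^sup>2) / (signal m)\<^sup>2) \<longlonglongrightarrow> 0"
    unfolding eta1 eta2 using tendsto_mult[OF inv_g inv_sqrt_K] tendsto_power[OF inv_g, of 2]
    by simp_all
  then show "(\<lambda>m. (sig_eps M eps m)\<^sup>2 / signal m) \<longlonglongrightarrow> 0"
    and "(\<lambda>m. K m * ((sig_eta M eta m)\<^sup>2 * (sig_eps M eps m)\<^sup>2) / (signal m)\<^sup>2) \<longlonglongrightarrow> 0"
    unfolding eps1 eps2 using tendsto_mult[OF tendsto_power[OF \<rho>, of 2]] by fastforce+
qed

lemma prob_pi_eta_large: "(\<lambda>m. measure (M m) {\<omega> \<in> space (M m). signal m / 4 \<le> \<bar>pi_eta m \<omega>\<bar>}) \<longlonglongrightarrow> 0"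
proof (rule prob_abs_ge_tendsto_0[OF prob measurable_noise(3) second_moment_pi_eta(1)])
  show "\<forall>\<^sub>F m in sequentially. 0 < signal m / 4"
    using eventually_signal_pos by eventually_elim simp
  have "(LINT \<omega>|M m. (pi_eta m \<omega>)\<^sup>2) / (signal m / 4)\<^sup>2
      = 32 * ((sig_eta M eta m)\<^sup>2 / signal m)" for m
    unfolding second_moment_pi_eta(2)
    by (cases "signal m = 0") (simp_all add: field_simps power2_eq_square)
  then show "(\<lambda>m. (LINT \<omega>|M m. (pi_eta m \<omega>)\<^sup>2) / (signal m / 4)\<^sup>2) \<longlonglongrightarrow> 0"
    using tendsto_mult_right_zero[OF noise_over_signal_tendsto_0(1), of 32] by simp
qed

lemma prob_eta_eta_large: "(\<lambda>m. measure (M m) {\<omega> \<in> space (M m). signal m / 4 \<le> \<bar>eta_eta m \<omega>\<bar>}) \<longlonglongrightarrow> 0"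
proof (rule prob_abs_ge_tendsto_0[OF prob measurable_noise(4) second_moment_eta_eta(1)])
  show "\<forall>\<^sub>F m in sequentially. 0 < signal m / 4"
    using eventually_signal_pos by eventually_elim simp
  have "(LINT \<omega>|M m. (eta_eta m \<omega>)\<^sup>2) / (signal m / 4)\<^sup>2
      = 16 * (K m * ((sig_eta M eta m)\<^sup>2 * (sig_eta M eta m)\<^sup>2) / (signal m)\<^sup>2)" for m
    unfolding second_moment_eta_eta(2)
    by (cases "signal m = 0") (simp_all add: field_simps power2_eq_square)
  then show "(\<lambda>m. (LINT \<omega>|M m. (eta_eta m \<omega>)\<^sup>2) / (signal m / 4)\<^sup>2) \<longlonglongrightarrow> 0"
    using tendsto_mult_right_zero[OF noise_over_signal_tendsto_0(2), of 16] by simp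
qed

lemma prob_pi_eps_large:
  assumes "0 < e"
  shows "(\<lambda>m. measure (M m) {\<omega> \<in> space (M m). e * signal m \<le> \<bar>pi_eps m \<omega>\<bar>}) \<longlonglongrightarrow> 0"
proof (rule prob_abs_ge_tendsto_0[OF prob measurable_noise(1) second_moment_pi_eps(1)])
  show "\<forall>\<^sub>F m in sequentially. 0 < e * signal m"
    using eventually_signal_pos by eventually_elim (simp add: assms)
  have "(LINT \<omega>|M m. (pi_eps m \<omega>)\<^sup>2) / (e * signal m)\<^sup>2
      = (sig_eps M eps m)\<^sup>2 / signal m / e\<^sup>2" for m
    unfolding second_moment_pi_eps(2) using assms
    by (cases "signal m = 0") (simp_all add: field_simps power2_eq_square)
  then show "(\<lambda>m. (LINT \<omega>|M m. (pi_eps m \<omega>)\<^sup>2) / (e * signal m)\<^sup>2) \<longlonglongrightarrow> 0"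
    using tendsto_divide_zero[OF noise_over_signal_tendsto_0(3), of "e\<^sup>2"] by simp
qed

lemma prob_eta_eps_large:
  assumes "0 < e"
  shows "(\<lambda>m. measure (M m) {\<omega> \<in> space (M m). e * signal m \<le> \<bar>eta_eps m \<omega>\<bar>}) \<longlonglongrightarrow> 0"
proof (rule prob_abs_ge_tendsto_0[OF prob measurable_noise(2) second_moment_eta_eps(1)])
  show "\<forall>\<^sub>F m in sequentially. 0 < e * signal m"
    using eventually_signal_pos by eventually_elim (simp add: assms)
  have "(LINT \<omega>|M m. (eta_eps m \<omega>)\<^sup>2) / (e * signal m)\<^sup>2
      = K m * ((sig_eta M eta m)\<^sup>2 * (sig_eps M eps m)\<^sup>2) / (signal m)\<^sup>2 / e\<^sup>2" for m
    unfolding second_moment_eta_eps(2) using assms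
    by (cases "signal m = 0") (simp_all add: field_simps power2_eq_square)
  then show "(\<lambda>m. (LINT \<omega>|M m. (eta_eps m \<omega>)\<^sup>2) / (e * signal m)\<^sup>2) \<longlonglongrightarrow> 0"
    using tendsto_divide_zero[OF noise_over_signal_tendsto_0(4), of "e\<^sup>2"] by simp
qed

lemma prob_pi_eps_large_sqrt_K:
  assumes "0 < \<delta>"
  shows "(\<lambda>m. measure (M m) {\<omega> \<in> space (M m).
    \<delta> * (sqrt (K m) * sig_eta M eta m * sig_eps M eps m) \<le> \<bar>pi_eps m \<omega>\<bar>}) \<longlonglongrightarrow> 0"
proof (rule prob_abs_ge_tendsto_0[OF prob measurable_noise(1) second_moment_pi_eps(1)])
  have pos: "0 < sqrt (K m)" "0 < sig_eta M eta m" "0 < sig_eps M eps m" for m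
    using K_pos[of m] sig_eta_pos[of m] sig_eps_pos[of m] by simp_all
  then show "\<forall>\<^sub>F m in sequentially. 0 < \<delta> * (sqrt (K m) * sig_eta M eta m * sig_eps M eps m)"
    using assms by simp
  have "(LINT \<omega>|M m. (pi_eps m \<omega>)\<^sup>2) / (\<delta> * (sqrt (K m) * sig_eta M eta m * sig_eps M eps m))\<^sup>2
      = signal m / (K m * (sig_eta M eta m)\<^sup>2) / \<delta>\<^sup>2" for m
    unfolding second_moment_pi_eps(2) using assms pos[of m]
    by (simp add: field_simps power2_eq_square)
  then show "(\<lambda>m. (LINT \<omega>|M m. (pi_eps m \<omega>)\<^sup>2)
      / (\<delta> * (sqrt (K m) * sig_eta M eta m * sig_eps M eps m))\<^sup>2) \<longlonglongrightarrow> 0"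
    using tendsto_divide_zero[OF signal_per_cell, of "\<delta>\<^sup>2"] by (simp add: signal_def)
qed

lemma beta_hat_consistent: "conv_in_prob M (beta_hat K \<beta> fs eta eps) \<beta>"
  unfolding conv_in_prob_def
proof (intro allI impI)
  fix e :: real
  assume e: "0 < e"
  define bad where "bad m = {\<omega> \<in> space (M m). signal m / 4 \<le> \<bar>pi_eta m \<omega>\<bar>}
    \<union> {\<omega> \<in> space (M m). signal m / 4 \<le> \<bar>eta_eta m \<omega>\<bar>}
    \<union> {\<omega> \<in> space (M m). e / 4 * signal m \<le> \<bar>pi_eps m \<omega>\<bar>}
    \<union> {\<omega> \<in> space (M m). e / 4 * signal m \<le> \<bar>eta_eps m \<omega>\<bar>}" for m
  have e4: "0 < e / 4"
    using e by simp
  have lim: "(\<lambda>m. measure (M m) (bad m)) \<longlonglongrightarrow> 0"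
    unfolding bad_def
    by (intro measure_Un_tendsto_0 prob_pi_eta_large prob_eta_eta_large prob_pi_eps_large
        prob_eta_eps_large e4 sets.Un borel_measurable_le borel_measurable_const
        borel_measurable_abs
        measurable_noise)
  have sub: "\<forall>\<^sub>F m in sequentially.
      {\<omega> \<in> space (M m). e < \<bar>beta_hat K \<beta> fs eta eps m \<omega> - \<beta>\<bar>} \<subseteq> bad m"
    using eventually_signal_pos
  proof eventually_elim
    case (elim m)
    show ?case
    proof (rule subsetI, rule ccontr)
      fix \<omega>
      assume \<omega>: "\<omega> \<in> {\<omega> \<in> space (M m). e < \<bar>beta_hat K \<beta> fs eta eps m \<omega> - \<beta>\<bar>}" and "\<omega> \<notin> bad m"
      then have "\<bar>pi_eta m \<omega>\<bar> < signal m / 4" "\<bar>eta_eta m \<omega>\<bar> < signal m / 4"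
        "\<bar>pi_eps m \<omega>\<bar> < e * signal m / 4" "\<bar>eta_eps m \<omega>\<bar> < e * signal m / 4"
        by (auto simp: bad_def)
      from abs_ratio_sub_le[OF elim this, of \<beta>] \<omega> show False
        by (simp add: beta_hat_eq jive_den_eq)
    qed
  qed
  have sets: "bad m \<in> sets (M m)" for m
    unfolding bad_def by measurable
  show "(\<lambda>m. measure (M m) {\<omega> \<in> space (M m). e < \<bar>beta_hat K \<beta> fs eta eps m \<omega> - \<beta>\<bar>})
      \<longlonglongrightarrow> 0"
    by (rule measure_tendsto_0_subset[OF prob sub sets lim])
qed

lemma weak_conv_eta_eps:
  "weak_conv_m (\<lambda>m. distr (M m) borel (eta_eps_std m)) std_normal_distribution"
proof -
  define \<mu> where "\<mu> m = distr (M m) borel (eta_eps_unit m 1)" for m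
  have meas [measurable]: "eta_eps_unit m 1 \<in> borel_measurable (M m)" for m
    using meas_eta[OF one_in_cells] meas_eps[OF one_in_cells]
    by (simp add: eta_eps_unit_def[abs_def])
  have "weak_conv_m (\<lambda>m. distr (M m) borel
      (\<lambda>\<omega>. (\<Sum>a\<in>{1..K m}. eta_eps_unit m a \<omega>) / sqrt (card {1..K m}))) std_normal_distribution"
  proof (rule clt_iid_triangular_array[OF prob indep_eta_eps_unit])
    show "filterlim (\<lambda>m. card {1..K m}) at_top sequentially"
      using K_tendsto by simp
    show "distr (M m) borel (eta_eps_unit m a) = \<mu> m" if "a \<in> {1..K m}" for m a
      using distr_eta_eps_unit[OF that] by (simp add: \<mu>_def)
    show "real_distribution (\<mu> m)" for m
      unfolding \<mu>_def by (rule prob_space.real_distribution_distr[OF prob meas])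
    show "integrable (\<mu> m) (\<lambda>x. x)" "(LINT x|\<mu> m. x) = 0"
      "integrable (\<mu> m) (\<lambda>x. x\<^sup>2)" "(LINT x|\<mu> m. x\<^sup>2) = 1" for m
      using moments_eta_eps_unit[of m] by (simp_all add: \<mu>_def integrable_distr_eq integral_distr)
    show "(\<lambda>m. LINT x|\<mu> m. x\<^sup>2 * indicator {x. e * sqrt (card {1..K m}) \<le> \<bar>x\<bar>} x) \<longlonglongrightarrow> 0"
      if "0 < e" for e
    proof -
      have f: "(\<lambda>x::real. x\<^sup>2 * indicator {x. e * sqrt (card {1..K m}) \<le> \<bar>x\<bar>} x)
          \<in> borel_measurable borel"
        for m by measurable
      have "(LINT x|\<mu> m. x\<^sup>2 * indicator {x. e * sqrt (card {1..K m}) \<le> \<bar>x\<bar>} x)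
          = (LINT \<omega>|M m. (eta_eps_unit m 1 \<omega>)\<^sup>2 *
              indicator {\<omega>. \<bar>eta_eps_unit m 1 \<omega>\<bar> \<ge> e * sqrt (K m)} \<omega>)" for m
        unfolding \<mu>_def integral_distr[OF meas f] by (simp add: indicator_def)
      with lindeberg[OF that] show ?thesis
        by (simp add: eta_eps_unit_def)
    qed
  qed simp
  then show ?thesis
    by (simp only: sum_eta_eps_unit)
qed

lemma tendsto_prob_abs_eta_eps_std_le:
  assumes "0 \<le> y"
  shows "(\<lambda>m. measure (M m) {\<omega> \<in> space (M m). \<bar>eta_eps_std m \<omega>\<bar> \<le> y}) \<longlonglongrightarrow> 2 * std_normal_cdf y - 1"
proof -
  have "measure (distr (M m) borel (eta_eps_std m)) {-y..y}
      = measure (M m) {\<omega> \<in> space (M m). \<bar>eta_eps_std m \<omega>\<bar> \<le> y}" for m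
    by (subst measure_distr) (auto intro!: arg_cong[where f = "measure (M m)"])
  moreover have "(\<lambda>m. measure (distr (M m) borel (eta_eps_std m)) {-y..y})
      \<longlonglongrightarrow> 2 * std_normal_cdf y - 1"
    using assms weak_conv_eta_eps
    by (intro weak_conv_std_normal_symmetric_interval prob_space.real_distribution_distr[OF prob])
      auto
  ultimately show ?thesis
    by simp
qed

lemma measure_ci_bad_event_tendsto_0:
  assumes meas_sh: "\<And>m. sh_eta m \<in> borel_measurable (M m)" "\<And>m. sh_eps m \<in> borel_measurable (M m)"
    and cons_eta: "conv_in_prob M (\<lambda>m \<omega>. sh_eta m \<omega> / sig_eta M eta m) 1"
    and cons_eps: "conv_in_prob M (\<lambda>m \<omega>. sh_eps m \<omega> / sig_eps M eps m) 1"
    and \<delta>: "0 < \<delta>"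
  shows "(\<lambda>m. measure (M m) (ci_bad_event sh_eta sh_eps \<delta> m)) \<longlonglongrightarrow> 0"
proof -
  have "(\<lambda>m. measure (M m) {\<omega> \<in> space (M m). \<delta> / 3 < \<bar>sh_eta m \<omega> / sig_eta M eta m - 1\<bar>}) \<longlonglongrightarrow> 0"
    "(\<lambda>m. measure (M m) {\<omega> \<in> space (M m). \<delta> / 3 < \<bar>sh_eps m \<omega> / sig_eps M eps m - 1\<bar>}) \<longlonglongrightarrow> 0"
    using cons_eta[unfolded conv_in_prob_def, rule_format, of "\<delta> / 3"]
      cons_eps[unfolded conv_in_prob_def, rule_format, of "\<delta> / 3"] \<delta>
    by simp_all
  then show ?thesis
    unfolding ci_bad_event_def
    by (intro measure_Un_tendsto_0 prob_pi_eta_large prob_eta_eta_large prob_pi_eps_large_sqrt_K \<delta>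
        sets.Un borel_measurable_le borel_measurable_less borel_measurable_const
        borel_measurable_abs
        borel_measurable_diff borel_measurable_divide measurable_noise meas_sh)
qed

lemma coverage:
  assumes meas_sh: "\<And>m. sh_eta m \<in> borel_measurable (M m)" "\<And>m. sh_eps m \<in> borel_measurable (M m)"
    and cons_eta: "conv_in_prob M (\<lambda>m \<omega>. sh_eta m \<omega> / sig_eta M eta m) 1"
    and cons_eps: "conv_in_prob M (\<lambda>m \<omega>. sh_eps m \<omega> / sig_eps M eps m) 1"
    and q: "0 < q"
  shows "(\<lambda>m. measure (M m) {\<omega> \<in> space (M m). in_CI K \<beta> fs eta eps sh_eta sh_eps q m \<omega>})
    \<longlonglongrightarrow> 2 * std_normal_cdf q - 1"
proof -
  define p
    where "p m = measure (M m) {\<omega> \<in> space (M m). in_CI K \<beta> fs eta eps sh_eta sh_eps q m \<omega>}"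
    for m
  define F where "F y m = measure (M m) {\<omega> \<in> space (M m). \<bar>eta_eps_std m \<omega>\<bar> \<le> y}" for y m
  \<comment> \<open>With \<open>\<delta> = r / (q + 1)\<close> the bracket \<open>q \<plusminus> \<delta> (q + 1)\<close> of \<open>measure_in_CI_bracket\<close> is \<open>q \<plusminus> r\<close>.\<close>
  define b where "b r m = measure (M m) (ci_bad_event sh_eta sh_eps (r / (q + 1)) m)" for r m
  have "p \<longlonglongrightarrow> 2 * std_normal_cdf q - 1"
  proof (rule tendsto_of_bracketing[where F = F and G = "\<lambda>y. 2 * std_normal_cdf y - 1"
        and b = b and d = q])
    show "isCont (\<lambda>y. 2 * std_normal_cdf y - 1) q"
      by (intro continuous_intros isCont_std_normal_cdf)
    show "F y \<longlonglongrightarrow> 2 * std_normal_cdf y - 1" if "\<bar>y - q\<bar> \<le> q" for y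
      using tendsto_prob_abs_eta_eps_std_le[of y] that by (simp add: F_def[abs_def])
    show "b r \<longlonglongrightarrow> 0" if "0 < r" for r
      using measure_ci_bad_event_tendsto_0[OF meas_sh cons_eta cons_eps] that q
      by (simp add: b_def[abs_def])
    show "\<forall>\<^sub>F m in sequentially. F (q - r) m - b r m \<le> p m \<and> p m \<le> F (q + r) m + b r m"
      if "0 < r" "r \<le> q" for r
      using eventually_signal_pos
    proof eventually_elim
      case (elim m)
      have "r / (q + 1) \<le> 1"
        using that q by simp
      from measure_in_CI_bracket[where sh_eta = sh_eta and sh_eps = sh_eps and \<beta> = \<beta>,
          OF meas_sh elim this q] show ?case
        using q by (simp add: F_def b_def p_def)
    qed
  qed (use q in simp)
  then show ?thesis
    by (simp add: p_def[abs_def])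
qed

end

theorem theorem3:
  fixes M :: "nat \<Rightarrow> 'w measure"
    and K :: "nat \<Rightarrow> nat"
    and \<beta> :: real
    and fs :: "nat \<Rightarrow> nat \<Rightarrow> real"
    and eta eps :: "nat \<Rightarrow> nat \<Rightarrow> nat \<Rightarrow> 'w \<Rightarrow> real"
    and sh_eta sh_eps :: "nat \<Rightarrow> 'w \<Rightarrow> real"
    and \<alpha> q c :: real
  assumes prob: "\<And>m. prob_space (M m)"
    and K_pos: "\<And>m. K m \<ge> 1"
    and K_inf: "filterlim K at_top sequentially"
    and meas_eta: "\<And>m a v. a \<in> {1..K m} \<Longrightarrow> v \<in> {0,1} \<Longrightarrow> eta m a v \<in> borel_measurable (M m)"
    and meas_eps: "\<And>m a v. a \<in> {1..K m} \<Longrightarrow> v \<in> {0,1} \<Longrightarrow> eps m a v \<in> borel_measurable (M m)"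
    and indep: "\<And>m. prob_space.indep_vars (M m) (\<lambda>_. borel)
                   (\<lambda>(a,v) \<omega>. (eta m a v \<omega>, eps m a v \<omega>)) ({1..K m} \<times> {0,1})"
    and ident: "\<And>m a v. a \<in> {1..K m} \<Longrightarrow> v \<in> {0,1} \<Longrightarrow>
                   distr (M m) borel (\<lambda>\<omega>. (eta m a v \<omega>, eps m a v \<omega>))
                 = distr (M m) borel (\<lambda>\<omega>. (eta m 1 0 \<omega>, eps m 1 0 \<omega>))"
    and int_eta: "\<And>m a v. a \<in> {1..K m} \<Longrightarrow> v \<in> {0,1} \<Longrightarrow> integrable (M m) (eta m a v)"
    and int_eps: "\<And>m a v. a \<in> {1..K m} \<Longrightarrow> v \<in> {0,1} \<Longrightarrow> integrable (M m) (eps m a v)"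
    and mean_eta: "\<And>m a v. a \<in> {1..K m} \<Longrightarrow> v \<in> {0,1} \<Longrightarrow> (LINT \<omega>|M m. eta m a v \<omega>) = 0"
    and mean_eps: "\<And>m a v. a \<in> {1..K m} \<Longrightarrow> v \<in> {0,1} \<Longrightarrow> (LINT \<omega>|M m. eps m a v \<omega>) = 0"
    and sq_eta: "\<And>m a v. a \<in> {1..K m} \<Longrightarrow> v \<in> {0,1} \<Longrightarrow> integrable (M m) (\<lambda>\<omega>. (eta m a v \<omega>)\<^sup>2)"
    and sq_eps: "\<And>m a v. a \<in> {1..K m} \<Longrightarrow> v \<in> {0,1} \<Longrightarrow> integrable (M m) (\<lambda>\<omega>. (eps m a v \<omega>)\<^sup>2)"
    and var_eta_pos: "\<And>m. (LINT \<omega>|M m. (eta m 1 0 \<omega>)\<^sup>2) > 0"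
    and var_eps_pos: "\<And>m. (LINT \<omega>|M m. (eps m 1 0 \<omega>)\<^sup>2) > 0"
    and a1: "(\<lambda>m. (\<Sum>a = 1..K m. (fs m a)\<^sup>2) / (real (K m) * (sig_eta M eta m)\<^sup>2)) \<longlonglongrightarrow> 0"
    and c_nonneg: "c \<ge> 0"
    and a2: "(\<lambda>m. sig_eps M eps m / sig_eta M eta m) \<longlonglongrightarrow> c"
    and a3: "filterlim (\<lambda>m. (\<Sum>a = 1..K m. (fs m a)\<^sup>2) / (sqrt (real (K m)) * (sig_eta M eta m)\<^sup>2))
               at_top sequentially"
    and lindeberg: "\<And>e. e > 0 \<Longrightarrow>
        (\<lambda>m. LINT \<omega>|M m.
            ((eta m 1 0 \<omega> * eps m 1 1 \<omega>) / (sig_eta M eta m * sig_eps M eps m))\<^sup>2 *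
            indicator {\<omega>. \<bar>(eta m 1 0 \<omega> * eps m 1 1 \<omega>) / (sig_eta M eta m * sig_eps M eps m)\<bar>
                          \<ge> e * sqrt (real (K m))} \<omega>) \<longlonglongrightarrow> 0"
    and meas_sh_eta: "\<And>m. sh_eta m \<in> borel_measurable (M m)"
    and meas_sh_eps: "\<And>m. sh_eps m \<in> borel_measurable (M m)"
    and cons_eta: "conv_in_prob M (\<lambda>m \<omega>. sh_eta m \<omega> / sig_eta M eta m) 1"
    and cons_eps: "conv_in_prob M (\<lambda>m \<omega>. sh_eps m \<omega> / sig_eps M eps m) 1"
    and alpha: "0 < \<alpha>" "\<alpha> < 1"
    and quantile: "std_normal_cdf q = 1 - \<alpha> / 2"
  shows "((\<lambda>m. measure (M m) {\<omega> \<in> space (M m). in_CI K \<beta> fs eta eps sh_eta sh_eps q m \<omega>})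
           \<longlonglongrightarrow> 1 - \<alpha>) \<and>
         conv_in_prob M (beta_hat K \<beta> fs eta eps) \<beta>"
proof -
  interpret jive_asymptotics M K fs eta eps c
    by (intro jive_asymptotics.intro jive_model.intro jive_asymptotics_axioms.intro) (fact assms)+
  have q: "0 < q"
    by (rule std_normal_quantile_pos[OF quantile alpha])
  from coverage[OF meas_sh_eta meas_sh_eps cons_eta cons_eps q] quantile beta_hat_consistent
  show ?thesis
    by simp
qed

end
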